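(* Let $0\le a<b$, $0\le c<d$, $\alpha,\beta>0$, $H=[a,b]^n\times[c,d]^m$, and $S=\{(x,y)\in H\mid\prod_{i=1}^m y_i^\alpha\ge\prod_{j=1}^n x_j^\beta\}$. Let $k=\min\{m,\lfloor\beta/\alpha\rfloor\}$. For $i=0,\dots,m-k$ and $j=0,\dots,n-1$ let $S_{ij}=S\cap\{(x,y)\in H\mid y_r=d\ (r\le i),\ y_r=c\ (r\ge i+k+1),\ y_1\ge\dots\ge y_m,\ x_s=b\ (s\le j),\ x_s=a\ (s\ge j+2)\}$, and for $j=0,\dots,n$ let $C_j=S\cap\{(x,y)\in H\mid x_s=b\ (s\le j),\ x_s=a\ (s\ge j+1),\ y_1\ge\dots\ge y_m\}$. Let $T=\bigcup_{i,j}S_{ij}\cup\bigcup_jC_j$. Then $$\mathrm{conv}(S)=\{(x,y)\mid\exists(u,v):\ v\ge_m y,\ u\ge_m x,\ (u,v)\in\mathrm{conv}(T)\}.$$ Moreover, if $m\alpha\le\beta$, then $\mathrm{conv}(S)=\{(x,y)\in H\mid\prod_{i=1}^m y_i^{1/m}\ge\prod_{j=1}^n(u^{S(x)}_j)^{\beta/(m\alpha)}\}$.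
   Context: $v\ge_m y$ means $\sum_{i=1}^j v_{[i]}\ge\sum_{i=1}^j y_{[i]}$ for $j$ less than the dimension, with equality for the full sum ($v_{[i]}$ the $i$-th largest entry). For $x\in[a,b]^n$, $S(x)=\sum_{i=1}^n(x_i-a)$; for $s\in[0,n(b-a)]$, $i^s=\max\{i\in\{0,\dots,n\}\mid i(b-a)<s\}$ (with $i^0=0$), and $u^s\in\mathbb{R}^n$ is given by $u^s_i=b$ for $i\le i^s$, $u^s_{i^s+1}=a+s-(b-a)i^s$, $u^s_i=a$ for $i>i^s+1$. *)

theory Defs
  imports "HOL-Analysis.Analysis" "HOL-Library.Function_Algebras"
begin

text \<open>Real vector space structure on functions (pointwise), so that the library's
  convex hull can be used for points of R^n represented as functions nat => real
  (coordinates 1..n, zero elsewhere).\<close>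

instantiation "fun" :: (type, real_vector) real_vector
begin
definition scaleR_fun :: "real \<Rightarrow> ('a \<Rightarrow> 'b) \<Rightarrow> 'a \<Rightarrow> 'b" where
  "scaleR_fun r f = (\<lambda>x. r *\<^sub>R f x)"
instance
  by standard (auto simp: scaleR_fun_def fun_eq_iff scaleR_add_right scaleR_add_left)
end

definition isvec :: "nat \<Rightarrow> (nat \<Rightarrow> real) \<Rightarrow> bool" where
  "isvec n x \<longleftrightarrow> (\<forall>i. i \<notin> {1..n} \<longrightarrow> x i = 0)"

definition largest :: "nat \<Rightarrow> (nat \<Rightarrow> real) \<Rightarrow> nat \<Rightarrow> real" where
  "largest n v i = rev (sort (map v [1..<n+1])) ! (i - 1)"

definition majorizes :: "nat \<Rightarrow> (nat \<Rightarrow> real) \<Rightarrow> (nat \<Rightarrow> real) \<Rightarrow> bool" where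
  "majorizes n v y \<longleftrightarrow>
     (\<forall>j. 1 \<le> j \<and> j < n \<longrightarrow> (\<Sum>i=1..j. largest n v i) \<ge> (\<Sum>i=1..j. largest n y i)) \<and>
     (\<Sum>i=1..n. largest n v i) = (\<Sum>i=1..n. largest n y i)"

definition boxH :: "nat \<Rightarrow> nat \<Rightarrow> real \<Rightarrow> real \<Rightarrow> real \<Rightarrow> real \<Rightarrow>
    ((nat \<Rightarrow> real) \<times> (nat \<Rightarrow> real)) set" where
  "boxH n m a b c d = {(x, y). isvec n x \<and> isvec m y \<and>
      (\<forall>i\<in>{1..n}. a \<le> x i \<and> x i \<le> b) \<and> (\<forall>i\<in>{1..m}. c \<le> y i \<and> y i \<le> d)}"

definition setS :: "nat \<Rightarrow> nat \<Rightarrow> real \<Rightarrow> real \<Rightarrow> real \<Rightarrow> real \<Rightarrow> real \<Rightarrow> real \<Rightarrow>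
    ((nat \<Rightarrow> real) \<times> (nat \<Rightarrow> real)) set" where
  "setS n m a b c d \<alpha> \<beta> = {(x, y) \<in> boxH n m a b c d.
      (\<Prod>i=1..m. y i powr \<alpha>) \<ge> (\<Prod>j=1..n. x j powr \<beta>)}"

definition nonincr :: "nat \<Rightarrow> (nat \<Rightarrow> real) \<Rightarrow> bool" where
  "nonincr m y \<longleftrightarrow> (\<forall>r s. 1 \<le> r \<and> r \<le> s \<and> s \<le> m \<longrightarrow> y s \<le> y r)"

text \<open>S_ij (k is the parameter min{m, floor(beta/alpha)}).\<close>
definition setSij :: "nat \<Rightarrow> nat \<Rightarrow> real \<Rightarrow> real \<Rightarrow> real \<Rightarrow> real \<Rightarrow> real \<Rightarrow> real \<Rightarrow>
    nat \<Rightarrow> nat \<Rightarrow> nat \<Rightarrow> ((nat \<Rightarrow> real) \<times> (nat \<Rightarrow> real)) set" where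
  "setSij n m a b c d \<alpha> \<beta> k i j = setS n m a b c d \<alpha> \<beta> \<inter> {(x, y) \<in> boxH n m a b c d.
      (\<forall>r\<in>{1..m}. r \<le> i \<longrightarrow> y r = d) \<and> (\<forall>r\<in>{1..m}. r \<ge> i + k + 1 \<longrightarrow> y r = c) \<and>
      nonincr m y \<and>
      (\<forall>s\<in>{1..n}. s \<le> j \<longrightarrow> x s = b) \<and> (\<forall>s\<in>{1..n}. s \<ge> j + 2 \<longrightarrow> x s = a)}"

definition setC :: "nat \<Rightarrow> nat \<Rightarrow> real \<Rightarrow> real \<Rightarrow> real \<Rightarrow> real \<Rightarrow> real \<Rightarrow> real \<Rightarrow>
    nat \<Rightarrow> ((nat \<Rightarrow> real) \<times> (nat \<Rightarrow> real)) set" where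
  "setC n m a b c d \<alpha> \<beta> j = setS n m a b c d \<alpha> \<beta> \<inter> {(x, y) \<in> boxH n m a b c d.
      (\<forall>s\<in>{1..n}. s \<le> j \<longrightarrow> x s = b) \<and> (\<forall>s\<in>{1..n}. s \<ge> j + 1 \<longrightarrow> x s = a) \<and>
      nonincr m y}"

definition sumS :: "nat \<Rightarrow> real \<Rightarrow> (nat \<Rightarrow> real) \<Rightarrow> real" where
  "sumS n a x = (\<Sum>i=1..n. (x i - a))"

definition istar :: "nat \<Rightarrow> real \<Rightarrow> real \<Rightarrow> real \<Rightarrow> nat" where
  "istar n a b s = (if s = 0 then 0 else Max {i. i \<le> n \<and> real i * (b - a) < s})"

definition ustar :: "nat \<Rightarrow> real \<Rightarrow> real \<Rightarrow> real \<Rightarrow> nat \<Rightarrow> real" where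
  "ustar n a b s i =
     (if i \<le> istar n a b s then b
      else if i = istar n a b s + 1 then a + s - (b - a) * real (istar n a b s)
      else a)"

end

(*
  If u majorizes x then x is a convex combination of permutations of u (Rado); proved here by
  Robin Hood transfers between a sorted u and a sorted x. Since S is invariant under permuting
  the x- and y-coordinates separately, every point majorized by a point of conv T lies in conv S.

  Conversely, sort a point of S and move mass from its last to its first fractional x-coordinate:
  this majorizes x and lowers the product of the x_j, so x becomes a staircase (b,...,b,t,a,...,a).
  If y still has N > floor(beta/alpha) fractional coordinates, scale t by 1 + mu and these
  coordinates by 1 + g mu, where g = beta / (N alpha) < 1. By Bernoulli's inequality the
  whole segment stays in S, and at both ends a coordinate hits the boundary of the box, so
  induction on N lands in conv T. The set of points majorized by conv T is convex because
  majorization by sorted vectors is preserved under convex combinations.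

  If m alpha <= beta, the same reduction sends x to u^{S(x)}, and the geometric-mean
  description is convex: s |-> prod_j u^s_j is the maximum of affine functions, t |-> t^(beta/(m alpha))
  is convex and increasing, and the geometric mean is concave.
*)

theory Submission
  imports Defs "HOL-Combinatorics.Permutations"
begin

declare upt_Suc[simp del]

lemma scaleR_fun_app [simp]: "(r *\<^sub>R f) i = r * f i"
  by (simp add: scaleR_fun_def)

section \<open>Decreasing rearrangement and majorization\<close>

definition prefix_sum :: "(nat \<Rightarrow> real) \<Rightarrow> nat \<Rightarrow> real" where
  "prefix_sum v j = (\<Sum>i=1..j. v i)"

definition rearr :: "nat \<Rightarrow> (nat \<Rightarrow> real) \<Rightarrow> nat \<Rightarrow> real" where
  "rearr n v i = (if i \<in> {1..n} then largest n v i else 0)"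

definition perm_orbit :: "nat \<Rightarrow> (nat \<Rightarrow> real) \<Rightarrow> (nat \<Rightarrow> real) set" where
  "perm_orbit n v = {v \<circ> p | p. p permutes {1..n}}"

definition dominates :: "nat \<Rightarrow> (nat \<Rightarrow> real) \<Rightarrow> (nat \<Rightarrow> real) \<Rightarrow> bool" where
  "dominates n u x \<longleftrightarrow> (\<forall>j. 1 \<le> j \<and> j < n \<longrightarrow> prefix_sum x j \<le> prefix_sum u j) \<and> prefix_sum x n = prefix_sum u n"

lemma largest_Suc: "largest n v i = rev (sort (map v [1..<Suc n])) ! (i - 1)"
  by (simp add: largest_def)

lemma rev_sort_nonincr:
  assumes "nonincr n v"
  shows "rev (sort (map v [1..<Suc n])) = map v [1..<Suc n]"
proof -
  let ?l = "map v [1..<Suc n]"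
  have "sorted (rev ?l)"
    unfolding sorted_iff_nth_mono
  proof (intro allI impI)
    fix i j assume ij: "i \<le> j" "j < length (rev ?l)"
    then show "rev ?l ! i \<le> rev ?l ! j"
    proof -
      have "n - Suc j \<le> n - Suc i" using ij by (simp add: diff_le_mono2)
      then show ?thesis using ij
        assms[unfolded nonincr_def, rule_format, of "Suc (n - Suc j)" "Suc (n - Suc i)"]
        by (auto simp: rev_nth nth_upt)
    qed
  qed
  then have "sort ?l = rev ?l"
    by (intro properties_for_sort) auto
  then show ?thesis by simp
qed

lemma largest_nonincr:
  assumes "nonincr n v" "i \<in> {1..n}"
  shows "largest n v i = v i"
proof -
  have "i - 1 < n" "Suc 0 + (i - 1) = i" using assms(2) by auto
  then show ?thesis
    unfolding largest_Suc rev_sort_nonincr[OF assms(1)] by (simp add: nth_upt)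
qed

lemma perm_exists_of_mset_eq:
  assumes "isvec n w" "isvec n v" "mset (map w [1..<Suc n]) = mset (map v [1..<Suc n])"
  shows "\<exists>p. p permutes {1..n} \<and> w = v \<circ> p"
proof -
  obtain q where q: "q permutes {..<length (map v [1..<Suc n])}"
    "permute_list q (map v [1..<Suc n]) = map w [1..<Suc n]"
    using mset_eq_permutation[OF assms(3)] by blast
  have qn: "q permutes {..<n}" using q(1) by simp
  define p where "p i = (if i \<in> {1..n} then Suc (q (i - 1)) else i)" for i
  have b1: "bij_betw (\<lambda>i. i - 1) {1..n} {..<n}"
    by (rule bij_betw_byWitness[where f'=Suc]) auto
  have b2: "bij_betw q {..<n} {..<n}" using permutes_imp_bij[OF qn] .
  have b3: "bij_betw Suc {..<n} {1..n}"
    by (rule bij_betw_byWitness[where f'="\<lambda>i. i - 1"]) auto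
  have "bij_betw (Suc \<circ> (q \<circ> (\<lambda>i. i - 1))) {1..n} {1..n}"
    by (rule bij_betw_trans[OF bij_betw_trans[OF b1 b2] b3])
  then have "bij_betw p {1..n} {1..n}"
    by (rule bij_betw_cong[THEN iffD1, rotated]) (auto simp: p_def)
  then have pp: "p permutes {1..n}"
    by (rule bij_imp_permutes) (auto simp: p_def)
  have "w = v \<circ> p"
  proof
    fix i
    show "w i = (v \<circ> p) i"
    proof (cases "i \<in> {1..n}")
      case True
      then have i1: "i - 1 < n" by auto
      have "map w [1..<Suc n] ! (i - 1) = permute_list q (map v [1..<Suc n]) ! (i - 1)"
        using q(2) by simp
      also have "\<dots> = map v [1..<Suc n] ! q (i - 1)"
        using q(1) i1 by (simp add: permute_list_nth)
      finally show ?thesis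
        using True i1 permutes_in_image[OF qn, of "i - 1"] by (auto simp: p_def nth_upt)
    next
      case False
      then show ?thesis using assms(1,2) by (auto simp: isvec_def p_def)
    qed
  qed
  then show ?thesis using pp by blast
qed

lemma map_rearr: "map (rearr n v) [1..<Suc n] = rev (sort (map v [1..<Suc n]))"
  by (rule nth_equalityI) (auto simp: rearr_def largest_Suc nth_upt)

lemma isvec_rearr: "isvec n (rearr n v)"
  by (simp add: isvec_def rearr_def)

lemma nonincr_rearr: "nonincr n (rearr n v)"
  unfolding nonincr_def
proof (intro allI impI)
  fix r s :: nat assume rs: "1 \<le> r \<and> r \<le> s \<and> s \<le> n"
  let ?l = "sort (map v [1..<Suc n])"
  have len: "length ?l = n" by simp
  have "?l ! (n - s) \<le> ?l ! (n - r)"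
    by (rule sorted_nth_mono) (use rs in auto)
  moreover have "rev ?l ! (s - 1) = ?l ! (n - s)" "rev ?l ! (r - 1) = ?l ! (n - r)"
    using rs by (auto simp: rev_nth)
  ultimately show "rearr n v s \<le> rearr n v r"
    using rs by (simp add: rearr_def largest_Suc)
qed

lemma rearr_eq_comp_perm:
  assumes "isvec n v"
  shows "\<exists>p. p permutes {1..n} \<and> rearr n v = v \<circ> p"
  by (rule perm_exists_of_mset_eq[OF isvec_rearr assms]) (unfold map_rearr, simp)

lemma rearr_nonincr_id:
  assumes "isvec n v" "nonincr n v"
  shows "rearr n v = v"
  using assms largest_nonincr by (auto simp: rearr_def isvec_def fun_eq_iff)

lemma sum_largest_eq_prefix_sum: "j \<le> n \<Longrightarrow> (\<Sum>i=1..j. largest n v i) = prefix_sum (rearr n v) j"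
  by (auto simp: prefix_sum_def rearr_def intro!: sum.cong)

lemma sum_largest_eq_prefix_sum': "j \<le> n \<Longrightarrow> sum (largest n v) {Suc 0..j} = prefix_sum (rearr n v) j"
  using sum_largest_eq_prefix_sum[of j n v] by simp

lemma majorizes_iff_dominates: "majorizes n u x \<longleftrightarrow> dominates n (rearr n u) (rearr n x)"
  by (auto simp: majorizes_def dominates_def sum_largest_eq_prefix_sum')

lemma sum_subset_le_prefix_sum:
  assumes "nonincr n w" "A \<subseteq> {1..n}" "card A = j" "j \<le> n"
  shows "sum w A \<le> prefix_sum w j"
proof (cases "j = 0")
  case True
  then have "A = {}" using assms by (metis card_eq_0_iff finite_atLeastAtMost finite_subset)
  then show ?thesis using True by (simp add: prefix_sum_def)
next
  case False
  define B where "B = {1..j}"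
  have fA: "finite A" using assms(2) finite_subset by blast
  have sA: "sum w A = sum w (A \<inter> B) + sum w (A - B)"
    using fA by (rule sum.Int_Diff)
  have sB: "sum w B = sum w (A \<inter> B) + sum w (B - A)"
    using sum.Int_Diff[of B w A] by (simp add: B_def Int_commute)
  have cAB: "card (A - B) = card (B - A)"
    using card_Diff_subset_Int[of A B] card_Diff_subset_Int[of B A] fA assms(3)
    by (simp add: B_def Int_commute)
  have "sum w (A - B) \<le> of_nat (card (A - B)) * w j"
  proof (rule sum_bounded_above)
    fix i assume "i \<in> A - B"
    then show "w i \<le> w j" using assms(1,2,4) False unfolding nonincr_def B_def by auto
  qed
  moreover have "of_nat (card (B - A)) * w j \<le> sum w (B - A)"
  proof (rule sum_bounded_below)
    fix i assume "i \<in> B - A"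
    then show "w j \<le> w i" using assms(1,4) unfolding nonincr_def B_def by auto
  qed
  ultimately show ?thesis using sA sB cAB by (simp add: prefix_sum_def B_def)
qed

lemma prefix_sum_comp_perm_le:
  assumes "nonincr n w" "p permutes {1..n}" "j \<le> n"
  shows "prefix_sum (w \<circ> p) j \<le> prefix_sum w j"
proof -
  have inj: "inj_on p {1..j}" using permutes_inj[OF assms(2)] by (simp add: inj_on_def inj_def)
  have "prefix_sum (w \<circ> p) j = sum w (p ` {1..j})"
    unfolding prefix_sum_def by (subst sum.reindex[OF inj]) (simp add: comp_def)
  also have "\<dots> \<le> prefix_sum w j"
  proof (rule sum_subset_le_prefix_sum[OF assms(1) _ _ assms(3)])
    show "p ` {1..j} \<subseteq> {1..n}" using permutes_image[OF assms(2)] assms(3) by auto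
    show "card (p ` {1..j}) = j" using card_image[OF inj] by simp
  qed
  finally show ?thesis .
qed

lemma prefix_sum_comp_perm_total:
  assumes "p permutes {1..n}"
  shows "prefix_sum (w \<circ> p) n = prefix_sum w n"
  using sum.permute[OF assms, of w] by (simp add: prefix_sum_def)

section \<open>Majorized vectors lie in the convex hull of permutations\<close>

lemma linear_comp_right: "linear (\<lambda>v::nat \<Rightarrow> real. v \<circ> q)"
  by (rule linearI) (auto simp: fun_eq_iff)

lemma perm_orbit_self: "u \<in> perm_orbit n u"
  unfolding perm_orbit_def by (rule CollectI, rule exI[of _ id]) auto

lemma perm_orbit_comp: "w \<in> perm_orbit n u \<Longrightarrow> q permutes {1..n} \<Longrightarrow> w \<circ> q \<in> perm_orbit n u"
  unfolding perm_orbit_def by (auto simp: comp_assoc intro: permutes_compose)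

lemma perm_orbit_hull_closed:
  assumes "u' \<in> convex hull perm_orbit n u" "w \<in> perm_orbit n u'"
  shows "w \<in> convex hull perm_orbit n u"
proof -
  obtain q where q: "q permutes {1..n}" "w = u' \<circ> q" using assms(2) by (auto simp: perm_orbit_def)
  have "w \<in> (\<lambda>v. v \<circ> q) ` (convex hull perm_orbit n u)" using assms(1) q by auto
  also have "\<dots> = convex hull ((\<lambda>v. v \<circ> q) ` perm_orbit n u)"
    by (rule convex_hull_linear_image[OF linear_comp_right])
  also have "\<dots> \<subseteq> convex hull perm_orbit n u"
    by (rule hull_mono) (use q(1) perm_orbit_comp in blast)
  finally show ?thesis .
qed

lemma hull_perm_orbit_trans:
  assumes "x \<in> convex hull perm_orbit n u'" "u' \<in> convex hull perm_orbit n u"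
  shows "x \<in> convex hull perm_orbit n u"
proof -
  have "perm_orbit n u' \<subseteq> convex hull perm_orbit n u" using perm_orbit_hull_closed[OF assms(2)] by blast
  then have "convex hull perm_orbit n u' \<subseteq> convex hull perm_orbit n u"
    by (rule convex_hull_subset)
  then show ?thesis using assms(1) by blast
qed

lemma prefix_sum_diff: "prefix_sum u p - prefix_sum x p = (\<Sum>i=1..p. u i - x i)"
  by (simp add: prefix_sum_def sum_subtractf)

lemma prefix_sum_transfer:
  "prefix_sum (u(j := u j - \<delta>, k := u k + \<delta>)) p =
     prefix_sum u p - (if 1 \<le> j \<and> j \<le> p then \<delta> else 0) + (if 1 \<le> k \<and> k \<le> p then \<delta> else 0)"
  if "j \<noteq> k"
proof -
  have "u(j := u j - \<delta>, k := u k + \<delta>) = (\<lambda>i. u i - (if i = j then \<delta> else 0) + (if i = k then \<delta> else 0))"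
    using that by (auto simp: fun_eq_iff)
  then show ?thesis
    by (simp add: prefix_sum_def sum.distrib sum_subtractf sum.delta)
qed

lemma transfer_in_hull_perm_orbit:
  assumes "j \<in> {1..n}" "k \<in> {1..n}" "0 \<le> \<delta>" "\<delta> \<le> u j - u k"
  shows "u(j := u j - \<delta>, k := u k + \<delta>) \<in> convex hull perm_orbit n u"
proof (cases "\<delta> = 0")
  case True
  then show ?thesis using hull_inc[OF perm_orbit_self] by simp
next
  case False
  then have jk: "u k < u j" "j \<noteq> k" using assms(3,4) by auto
  define lam where "lam = \<delta> / (u j - u k)"
  have lam: "0 \<le> lam" "lam \<le> 1" "lam * (u j - u k) = \<delta>"
    using assms(3,4) jk by (auto simp: lam_def field_simps)
  have "u(j := u j - \<delta>, k := u k + \<delta>) = (1 - lam) *\<^sub>R u + lam *\<^sub>R (u \<circ> Transposition.transpose j k)"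
    using lam(3) jk(2) by (auto simp: fun_eq_iff Transposition.transpose_def algebra_simps)
  moreover have "u \<in> convex hull perm_orbit n u" by (rule hull_inc[OF perm_orbit_self])
  moreover have "u \<circ> Transposition.transpose j k \<in> convex hull perm_orbit n u"
    using assms(1,2) by (intro hull_inc perm_orbit_comp[OF perm_orbit_self] permutes_swap_id) auto
  ultimately show ?thesis
    using convexD_alt[OF convex_convex_hull] lam(1,2) by metis
qed

text \<open>For sorted \<open>u\<close> dominating sorted \<open>x \<noteq> u\<close>, \<open>k\<close> is the first index where \<open>x\<close>
  exceeds \<open>u\<close> and \<open>j\<close> the last index before \<open>k\<close> where \<open>u\<close> exceeds \<open>x\<close>; moving mass
  from \<open>u j\<close> to \<open>u k\<close> brings \<open>u\<close> closer to \<open>x\<close>.\<close>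

lemma robin_hood_indices:
  assumes maj: "dominates n u x" and ne: "\<exists>i\<in>{1..n}. x i \<noteq> u i"
  obtains j k where "1 \<le> j" "j < k" "k \<le> n" "x j < u j" "u k < x k"
    "\<And>i. 1 \<le> i \<Longrightarrow> i < k \<Longrightarrow> x i \<le> u i" "\<And>i. j < i \<Longrightarrow> i < k \<Longrightarrow> u i = x i"
proof -
  have "\<exists>i\<in>{1..n}. x i > u i"
  proof (rule ccontr)
    assume "\<not> ?thesis"
    then have le: "\<forall>i\<in>{1..n}. x i \<le> u i" by auto
    from ne obtain i0 where i0: "i0 \<in> {1..n}" "x i0 \<noteq> u i0" by auto
    then have "x i0 < u i0" using le by force
    then have "prefix_sum x n < prefix_sum u n"
      unfolding prefix_sum_def by (intro sum_strict_mono_ex1) (use le i0 in auto)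
    then show False using maj by (simp add: dominates_def)
  qed
  define k where "k = (LEAST k. k \<in> {1..n} \<and> x k > u k)"
  have "k \<in> {1..n} \<and> x k > u k"
    unfolding k_def by (rule LeastI_ex) (use \<open>\<exists>i\<in>{1..n}. x i > u i\<close> in blast)
  then have k: "k \<in> {1..n}" "x k > u k" by auto
  have below_k: "x i \<le> u i" if "1 \<le> i" "i < k" for i
  proof (rule ccontr)
    assume "\<not> x i \<le> u i"
    then have "k \<le> i" unfolding k_def using that k by (intro Least_le) auto
    then show False using that by simp
  qed
  have "prefix_sum x k \<le> prefix_sum u k"
    using maj k by (cases "k = n") (auto simp: dominates_def)
  moreover obtain k' where k': "k = Suc k'" using k by (cases k) auto
  ultimately have "(\<Sum>i=1..k'. u i - x i) > 0"
    using k prefix_sum_diff[of u k x] by simp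
  then have "\<exists>i\<in>{1..k'}. u i > x i"
    by (metis (lifting) diff_gt_0_iff_gt not_less sum_nonpos)
  then have fJ: "finite {i\<in>{1..k'}. u i > x i}" "{i\<in>{1..k'}. u i > x i} \<noteq> {}" by auto
  define j where "j = Max {i\<in>{1..k'}. u i > x i}"
  have j: "j \<in> {1..k'}" "u j > x j" using Max_in[OF fJ] unfolding j_def by auto
  have "u i = x i" if "j < i" "i < k" for i
  proof -
    have "\<not> u i > x i"
    proof
      assume "u i > x i"
      then have "i \<le> j" using Max_ge[OF fJ(1), of i] that k' by (simp add: j_def)
      then show False using that by simp
    qed
    then show ?thesis using below_k[of i] that j by simp
  qed
  then show ?thesis using that[of j k] j k k' below_k by auto
qed

lemma nonincr_robin_hood_transfer:
  assumes xs: "nonincr n x" and us: "nonincr n u"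
    and jk: "1 \<le> j" "j < k" "k \<le> n" and \<delta>: "0 < \<delta>" "\<delta> \<le> u j - x j" "\<delta> \<le> x k - u k"
    and below_k: "\<And>i. 1 \<le> i \<Longrightarrow> i < k \<Longrightarrow> x i \<le> u i"
    and mid: "\<And>i. j < i \<Longrightarrow> i < k \<Longrightarrow> u i = x i"
  shows "nonincr n (u(j := u j - \<delta>, k := u k + \<delta>))" (is "nonincr n ?u'")
  unfolding nonincr_def
proof (intro allI impI)
  fix r s :: nat assume rs: "1 \<le> r \<and> r \<le> s \<and> s \<le> n"
  have x_mono: "x s' \<le> x r'" if "1 \<le> r'" "r' \<le> s'" "s' \<le> n" for r' s'
    using xs that unfolding nonincr_def by blast
  have "x k \<le> x j" using x_mono[of j k] jk by simp
  consider "r = s" | "r \<noteq> s" "r = j" | "r \<noteq> s" "r \<noteq> j" "s = k" | "r \<noteq> j" "s \<noteq> k"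
    by blast
  then show "?u' s \<le> ?u' r"
  proof cases
    case 2
    have "u s \<le> x j"
    proof (cases "s < k")
      case True
      then show ?thesis using mid[of s] x_mono[of j s] 2 rs by simp
    next
      case False
      then have "u s \<le> u k" using us rs jk 2 unfolding nonincr_def by simp
      then show ?thesis using \<open>x k \<le> x j\<close> \<delta>(1,3) by simp
    qed
    then show ?thesis using 2 rs jk \<delta> \<open>x k \<le> x j\<close> by auto
  next
    case 3
    then have "x k \<le> u r" using x_mono[of r k] below_k[of r] rs by simp
    then show ?thesis using 3 jk \<delta> by auto
  next
    case 4
    then have "?u' s \<le> u s" "u r \<le> ?u' r" using jk \<delta> by auto
    then show ?thesis using us rs unfolding nonincr_def by force
  qed simp
qed

lemma dominates_robin_hood_transfer:
  assumes maj: "dominates n u x"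
    and jk: "1 \<le> j" "j < k" "k \<le> n" and \<delta>: "0 < \<delta>" "\<delta> \<le> u j - x j"
    and below_k: "\<And>i. 1 \<le> i \<Longrightarrow> i < k \<Longrightarrow> x i \<le> u i"
  shows "dominates n (u(j := u j - \<delta>, k := u k + \<delta>)) x"
proof -
  have pu': "prefix_sum (u(j := u j - \<delta>, k := u k + \<delta>)) p
      = prefix_sum u p - (if j \<le> p then \<delta> else 0) + (if k \<le> p then \<delta> else 0)" for p
    using prefix_sum_transfer[of j k u \<delta> p] jk by simp
  have "prefix_sum x p \<le> prefix_sum (u(j := u j - \<delta>, k := u k + \<delta>)) p" if "p \<le> n" for p
  proof (cases "j \<le> p \<and> p < k")
    case True
    have "u j - x j \<le> (\<Sum>i=1..p. u i - x i)"
      by (rule member_le_sum) (use True jk below_k in auto)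
    then show ?thesis using pu'[of p] True \<delta>(2) prefix_sum_diff[of u p x] by simp
  next
    case False
    have "prefix_sum x p \<le> prefix_sum u p"
      using maj that by (cases "p = 0") (auto simp: dominates_def prefix_sum_def, cases "p = n", auto)
    then show ?thesis using pu'[of p] False jk by auto
  qed
  moreover have "prefix_sum (u(j := u j - \<delta>, k := u k + \<delta>)) n = prefix_sum u n"
    using pu'[of n] jk by simp
  ultimately show ?thesis using maj by (auto simp: dominates_def)
qed

lemma robin_hood_step:
  assumes uv: "isvec n u" and xs: "nonincr n x" and us: "nonincr n u"
    and maj: "dominates n u x" and ne: "\<exists>i\<in>{1..n}. x i \<noteq> u i"
  obtains u' where "isvec n u'" "nonincr n u'" "dominates n u' x"
    "card {i\<in>{1..n}. x i \<noteq> u' i} < card {i\<in>{1..n}. x i \<noteq> u i}"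
    "u' \<in> convex hull perm_orbit n u"
proof -
  obtain j k where jk: "1 \<le> j" "j < k" "k \<le> n" "x j < u j" "u k < x k"
    and below_k: "\<And>i. 1 \<le> i \<Longrightarrow> i < k \<Longrightarrow> x i \<le> u i"
    and mid: "\<And>i. j < i \<Longrightarrow> i < k \<Longrightarrow> u i = x i"
    using robin_hood_indices[OF maj ne] by blast
  define \<delta> where "\<delta> = min (u j - x j) (x k - u k)"
  have \<delta>: "0 < \<delta>" "\<delta> \<le> u j - x j" "\<delta> \<le> x k - u k" using jk by (auto simp: \<delta>_def)
  define u' where "u' = u(j := u j - \<delta>, k := u k + \<delta>)"
  have "isvec n u'" using uv jk by (auto simp: isvec_def u'_def)
  moreover have "nonincr n u'"
    unfolding u'_def by (rule nonincr_robin_hood_transfer[OF xs us jk(1-3) \<delta> below_k mid])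
  moreover have "dominates n u' x"
    unfolding u'_def by (rule dominates_robin_hood_transfer[OF maj jk(1-3) \<delta>(1,2) below_k])
  moreover have "card {i\<in>{1..n}. x i \<noteq> u' i} < card {i\<in>{1..n}. x i \<noteq> u i}"
  proof (rule psubset_card_mono)
    have "x i \<noteq> u i" if "x i \<noteq> u' i" for i
      using that jk(4,5) by (cases "i = j \<or> i = k") (auto simp: u'_def)
    then have "{i\<in>{1..n}. x i \<noteq> u' i} \<subseteq> {i\<in>{1..n}. x i \<noteq> u i}"
      by blast
    moreover have "j \<notin> {i\<in>{1..n}. x i \<noteq> u' i} \<or> k \<notin> {i\<in>{1..n}. x i \<noteq> u' i}"
      using jk by (simp add: u'_def \<delta>_def min_def)
    moreover have "j \<in> {i\<in>{1..n}. x i \<noteq> u i}" "k \<in> {i\<in>{1..n}. x i \<noteq> u i}"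
      using jk by auto
    ultimately show "{i\<in>{1..n}. x i \<noteq> u' i} \<subset> {i\<in>{1..n}. x i \<noteq> u i}"
      by blast
  qed simp
  moreover have "x k \<le> x j" using xs jk unfolding nonincr_def by auto
  then have "u' \<in> convex hull perm_orbit n u"
    unfolding u'_def using jk \<delta> by (intro transfer_in_hull_perm_orbit) auto
  ultimately show ?thesis by (rule that)
qed

lemma dominated_in_hull_perm_orbit:
  assumes "isvec n x" "isvec n u" "nonincr n x" "nonincr n u" "dominates n u x"
  shows "x \<in> convex hull perm_orbit n u"
  using assms
proof (induction "card {i\<in>{1..n}. x i \<noteq> u i}" arbitrary: u rule: less_induct)
  case less
  show ?case
  proof (cases "\<exists>i\<in>{1..n}. x i \<noteq> u i")
    case False
    then have "x = u" using less.prems(1,2) by (auto simp: isvec_def fun_eq_iff)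
    then show ?thesis using hull_inc[OF perm_orbit_self] by simp
  next
    case True
    obtain u' where u': "isvec n u'" "nonincr n u'" "dominates n u' x"
      "card {i\<in>{1..n}. x i \<noteq> u' i} < card {i\<in>{1..n}. x i \<noteq> u i}"
      "u' \<in> convex hull perm_orbit n u"
      using robin_hood_step[OF less.prems(2-5) True] by blast
    have "x \<in> convex hull perm_orbit n u'"
      using less.hyps[OF u'(4) less.prems(1) u'(1) less.prems(3) u'(2) u'(3)] .
    then show ?thesis using hull_perm_orbit_trans u'(5) by blast
  qed
qed

lemma majorized_in_hull_perm_orbit:
  assumes "isvec n x" "isvec n u" "majorizes n u x"
  shows "x \<in> convex hull perm_orbit n u"
proof -
  obtain p where p: "p permutes {1..n}" "rearr n x = x \<circ> p" using rearr_eq_comp_perm[OF assms(1)] by blast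
  obtain q where q: "q permutes {1..n}" "rearr n u = u \<circ> q" using rearr_eq_comp_perm[OF assms(2)] by blast
  have "rearr n x \<in> convex hull perm_orbit n (rearr n u)"
    by (rule dominated_in_hull_perm_orbit[OF isvec_rearr isvec_rearr nonincr_rearr nonincr_rearr])
      (use assms(3) in \<open>simp add: majorizes_iff_dominates\<close>)
  moreover have "rearr n u \<in> convex hull perm_orbit n u"
    by (rule hull_inc) (use q in \<open>auto simp: perm_orbit_def\<close>)
  ultimately have sx: "rearr n x \<in> convex hull perm_orbit n u" by (rule hull_perm_orbit_trans)
  have "x = rearr n x \<circ> inv p"
    using p permutes_inv_o(1)[OF p(1)] by (simp add: comp_assoc)
  then have "x \<in> perm_orbit n (rearr n x)"
    using permutes_inv[OF p(1)] by (auto simp: perm_orbit_def)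
  then show ?thesis by (rule perm_orbit_hull_closed[OF sx])
qed

section \<open>Convexity of majorization by sorted vectors\<close>

lemma prefix_sum_lincomb: "prefix_sum (a *\<^sub>R u + b *\<^sub>R v) j = a * prefix_sum u j + b * prefix_sum v j"
  by (simp add: prefix_sum_def sum.distrib sum_distrib_left)

lemma prefix_sum_comp_perm_le_rearr:
  assumes "isvec n x" "p permutes {1..n}" "j \<le> n"
  shows "prefix_sum (x \<circ> p) j \<le> prefix_sum (rearr n x) j"
proof -
  obtain q where q: "q permutes {1..n}" "rearr n x = x \<circ> q" using rearr_eq_comp_perm[OF assms(1)] by blast
  have e: "q \<circ> (inv q \<circ> p) = p"
    by (simp add: comp_assoc[symmetric] permutes_inv_o(1)[OF q(1)])
  have "x \<circ> p = rearr n x \<circ> (inv q \<circ> p)"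
    by (simp add: q(2) comp_assoc e)
  moreover have "inv q \<circ> p permutes {1..n}"
    by (intro permutes_compose permutes_inv assms q)
  ultimately show ?thesis using prefix_sum_comp_perm_le[OF nonincr_rearr _ assms(3)] by metis
qed

lemma prefix_sum_comp_perm_total_rearr:
  assumes "isvec n x" "p permutes {1..n}"
  shows "prefix_sum (x \<circ> p) n = prefix_sum (rearr n x) n"
proof -
  obtain q where q: "q permutes {1..n}" "rearr n x = x \<circ> q" using rearr_eq_comp_perm[OF assms(1)] by blast
  show ?thesis using prefix_sum_comp_perm_total[OF assms(2), of x] prefix_sum_comp_perm_total[OF q(1), of x] q(2) by simp
qed

lemma nonincr_convex_comb:
  assumes "nonincr n u1" "nonincr n u2" "0 \<le> a" "0 \<le> b"
  shows "nonincr n (a *\<^sub>R u1 + b *\<^sub>R u2)"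
  using assms unfolding nonincr_def
  by (auto intro!: add_mono mult_left_mono)

lemma isvec_lincomb: "isvec n u1 \<Longrightarrow> isvec n u2 \<Longrightarrow> isvec n (a *\<^sub>R u1 + b *\<^sub>R u2)"
  by (auto simp: isvec_def)

lemma majorizes_convex_comb:
  assumes "nonincr n u1" "nonincr n u2" "isvec n u1" "isvec n u2" "isvec n x1" "isvec n x2"
    "majorizes n u1 x1" "majorizes n u2 x2" "0 \<le> a" "0 \<le> b" "a + b = 1"
  shows "majorizes n (a *\<^sub>R u1 + b *\<^sub>R u2) (a *\<^sub>R x1 + b *\<^sub>R x2)"
proof -
  let ?u = "a *\<^sub>R u1 + b *\<^sub>R u2" and ?x = "a *\<^sub>R x1 + b *\<^sub>R x2"
  have su: "rearr n ?u = ?u"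
    by (rule rearr_nonincr_id[OF isvec_lincomb[OF assms(3,4)] nonincr_convex_comb[OF assms(1,2,9,10)]])
  have s1: "rearr n u1 = u1" by (rule rearr_nonincr_id[OF assms(3,1)])
  have s2: "rearr n u2 = u2" by (rule rearr_nonincr_id[OF assms(4,2)])
  obtain p where p: "p permutes {1..n}" "rearr n ?x = ?x \<circ> p"
    using rearr_eq_comp_perm[OF isvec_lincomb[OF assms(5,6)]] by blast
  have xp: "?x \<circ> p = a *\<^sub>R (x1 \<circ> p) + b *\<^sub>R (x2 \<circ> p)" by (auto simp: fun_eq_iff)
  have m1: "dominates n u1 (rearr n x1)" and m2: "dominates n u2 (rearr n x2)"
    using assms(7,8) s1 s2 by (simp_all add: majorizes_iff_dominates)
  show ?thesis
    unfolding majorizes_iff_dominates dominates_def su p(2) xp prefix_sum_lincomb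
  proof (intro conjI allI impI)
    fix j assume j: "1 \<le> j \<and> j < n"
    have "prefix_sum (x1 \<circ> p) j \<le> prefix_sum u1 j"
      using prefix_sum_comp_perm_le_rearr[OF assms(5) p(1), of j] m1 j by (auto simp: dominates_def)
    moreover have "prefix_sum (x2 \<circ> p) j \<le> prefix_sum u2 j"
      using prefix_sum_comp_perm_le_rearr[OF assms(6) p(1), of j] m2 j by (auto simp: dominates_def)
    ultimately show "a * prefix_sum (x1 \<circ> p) j + b * prefix_sum (x2 \<circ> p) j \<le> a * prefix_sum u1 j + b * prefix_sum u2 j"
      using assms(9,10) by (intro add_mono mult_left_mono)
  next
    show "a * prefix_sum (x1 \<circ> p) n + b * prefix_sum (x2 \<circ> p) n = a * prefix_sum u1 n + b * prefix_sum u2 n"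
      using prefix_sum_comp_perm_total_rearr[OF assms(5) p(1)] prefix_sum_comp_perm_total_rearr[OF assms(6) p(1)] m1 m2
      by (simp add: dominates_def)
  qed
qed

section \<open>Permutation invariance of \<open>S\<close>\<close>

lemma setS_comp_perm:
  assumes "(x, y) \<in> setS n m a b c d \<alpha> \<beta>" "p permutes {1..n}" "q permutes {1..m}"
  shows "(x \<circ> p, y \<circ> q) \<in> setS n m a b c d \<alpha> \<beta>"
proof -
  have pin: "\<And>i. i \<in> {1..n} \<Longrightarrow> p i \<in> {1..n}" using permutes_in_image[OF assms(2)] by blast
  have qin: "\<And>i. i \<in> {1..m} \<Longrightarrow> q i \<in> {1..m}" using permutes_in_image[OF assms(3)] by blast
  have pout: "\<And>i. i \<notin> {1..n} \<Longrightarrow> p i = i" using assms(2) by (simp add: permutes_not_in)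
  have qout: "\<And>i. i \<notin> {1..m} \<Longrightarrow> q i = i" using assms(3) by (simp add: permutes_not_in)
  have px: "(\<Prod>j=1..n. (x \<circ> p) j powr \<beta>) = (\<Prod>j=1..n. x j powr \<beta>)"
    using prod.permute[OF assms(2), of "\<lambda>j. x j powr \<beta>"] by (simp add: comp_def)
  have py: "(\<Prod>i=1..m. (y \<circ> q) i powr \<alpha>) = (\<Prod>i=1..m. y i powr \<alpha>)"
    using prod.permute[OF assms(3), of "\<lambda>i. y i powr \<alpha>"] by (simp add: comp_def)
  show ?thesis
    using assms(1) pin qin pout qout px py
    by (auto simp: setS_def boxH_def isvec_def)
qed

lemma linear_pair_comp_right: "linear (\<lambda>z::(nat \<Rightarrow> real) \<times> (nat \<Rightarrow> real). (fst z \<circ> p, snd z \<circ> q))"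
  by (rule linearI) (auto simp: fun_eq_iff)

lemma hull_setS_comp_perm:
  assumes "(u, v) \<in> convex hull setS n m a b c d \<alpha> \<beta>" "p permutes {1..n}" "q permutes {1..m}"
  shows "(u \<circ> p, v \<circ> q) \<in> convex hull setS n m a b c d \<alpha> \<beta>"
proof -
  let ?L = "\<lambda>z::(nat \<Rightarrow> real) \<times> (nat \<Rightarrow> real). (fst z \<circ> p, snd z \<circ> q)"
  have "(u \<circ> p, v \<circ> q) \<in> ?L ` (convex hull setS n m a b c d \<alpha> \<beta>)"
    using assms(1) by force
  also have "\<dots> = convex hull (?L ` setS n m a b c d \<alpha> \<beta>)"
    by (rule convex_hull_linear_image[OF linear_pair_comp_right])
  also have "\<dots> \<subseteq> convex hull setS n m a b c d \<alpha> \<beta>"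
    by (rule hull_mono) (use setS_comp_perm assms(2,3) in force)
  finally show ?thesis .
qed

lemma majorized_hull_subset_hull_setS:
  assumes T: "T \<subseteq> setS n m a b c d \<alpha> \<beta>"
    and xv: "isvec n x" and yv: "isvec m y" and uv: "isvec n u" and vv: "isvec m v"
    and mx: "majorizes n u x" and my: "majorizes m v y" and uvT: "(u, v) \<in> convex hull T"
  shows "(x, y) \<in> convex hull setS n m a b c d \<alpha> \<beta>"
proof -
  have uvS: "(u, v) \<in> convex hull setS n m a b c d \<alpha> \<beta>"
    using uvT hull_mono[OF T] by blast
  have sub: "perm_orbit n u \<times> perm_orbit m v \<subseteq> convex hull setS n m a b c d \<alpha> \<beta>"
    using hull_setS_comp_perm[OF uvS] by (auto simp: perm_orbit_def)
  have "(x, y) \<in> (convex hull perm_orbit n u) \<times> (convex hull perm_orbit m v)"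
    using majorized_in_hull_perm_orbit[OF xv uv mx] majorized_in_hull_perm_orbit[OF yv vv my] by simp
  also have "\<dots> = convex hull (perm_orbit n u \<times> perm_orbit m v)" by (simp add: convex_hull_Times)
  also have "\<dots> \<subseteq> convex hull setS n m a b c d \<alpha> \<beta>"
    using convex_hull_subset[OF sub] .
  finally show ?thesis .
qed

section \<open>Reduction of the x-coordinates to a staircase\<close>

definition in_box :: "nat \<Rightarrow> real \<Rightarrow> real \<Rightarrow> (nat \<Rightarrow> real) \<Rightarrow> bool" where
  "in_box n a b x \<longleftrightarrow> (\<forall>i\<in>{1..n}. a \<le> x i \<and> x i \<le> b)"

lemma boxH_D: "(x, y) \<in> boxH n m a b c d \<Longrightarrow> isvec n x \<and> isvec m y \<and> in_box n a b x \<and> in_box m c d y"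
  by (auto simp: boxH_def in_box_def)

definition staircase :: "nat \<Rightarrow> real \<Rightarrow> real \<Rightarrow> (nat \<Rightarrow> real) \<Rightarrow> nat \<Rightarrow> bool" where
  "staircase n a b x J \<longleftrightarrow> J < n \<and> (\<forall>i\<in>{1..n}. i \<le> J \<longrightarrow> x i = b) \<and> (\<forall>i\<in>{1..n}. J + 2 \<le> i \<longrightarrow> x i = a)"

lemma prefix_closed_eq_atLeastAtMost:
  assumes "D \<subseteq> {1..n}" "\<And>i r. i \<in> D \<Longrightarrow> 1 \<le> r \<Longrightarrow> r \<le> i \<Longrightarrow> r \<in> D"
  shows "D = {1..card D}"
proof (cases "D = {}")
  case True then show ?thesis by simp
next
  case False
  have fD: "finite D" using assms(1) finite_subset by blast
  define M where "M = Max D"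
  have M: "M \<in> D" using Max_in[OF fD False] by (simp add: M_def)
  have "D = {1..M}"
  proof
    show "D \<subseteq> {1..M}" using assms(1) Max_ge[OF fD] by (auto simp: M_def)
    show "{1..M} \<subseteq> D" using assms(2)[OF M] by auto
  qed
  then show ?thesis by simp
qed

lemma dominates_refl: "dominates n x x" by (simp add: dominates_def)

lemma dominates_trans: "dominates n u v \<Longrightarrow> dominates n v w \<Longrightarrow> dominates n u w"
  by (auto simp: dominates_def) (meson order_trans)

definition inner_coords :: "nat \<Rightarrow> real \<Rightarrow> real \<Rightarrow> (nat \<Rightarrow> real) \<Rightarrow> nat set" where
  "inner_coords n a b x = {i\<in>{1..n}. a < x i \<and> x i < b}"

lemma finite_inner_coords [simp]: "finite (inner_coords n a b x)"
  by (simp add: inner_coords_def)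

lemma staircase_if_card_inner_coords_le_1:
  assumes xs: "nonincr n x" and xb: "in_box n a b x" and "1 \<le> n"
    and card: "card (inner_coords n a b x) \<le> 1"
  shows "\<exists>J. staircase n a b x J"
proof -
  have x_mono: "x s \<le> x r" if "1 \<le> r" "r \<le> s" "s \<le> n" for r s
    using xs that unfolding nonincr_def by auto
  have bounds: "a \<le> x i \<and> x i \<le> b" if "i \<in> {1..n}" for i
    using xb that unfolding in_box_def by auto
  define D where "D = {i\<in>{1..n}. x i = b}"
  have D: "D = {1..card D}"
  proof (rule prefix_closed_eq_atLeastAtMost)
    show "D \<subseteq> {1..n}" by (auto simp: D_def)
    fix i r assume "i \<in> D" "1 \<le> r" "r \<le> i"
    then show "r \<in> D" using x_mono[of r i] bounds[of r] by (auto simp: D_def)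
  qed
  have "card D \<le> card {1..n}" by (rule card_mono) (auto simp: D_def)
  then have cD: "card D \<le> n" by simp
  have inD: "x i = b \<longleftrightarrow> i \<le> card D" if "i \<in> {1..n}" for i
  proof -
    have "x i = b \<longleftrightarrow> i \<in> D" using that by (simp add: D_def)
    also have "\<dots> \<longleftrightarrow> i \<le> card D" using that by (subst D) auto
    finally show ?thesis .
  qed
  show ?thesis
  proof (cases "card D = n")
    case True
    show ?thesis
      by (rule exI[of _ "n - 1"]) (use assms(3) inD True in \<open>auto simp: staircase_def\<close>)
  next
    case False
    then have Jn: "card D < n" using cD by simp
    have "x i = a" if i: "i \<in> {1..n}" "card D + 2 \<le> i" for i
    proof (rule ccontr)
      assume "x i \<noteq> a"
      then have xi: "a < x i" "x i < b" using bounds[OF i(1)] inD[OF i(1)] i(2) by auto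
      have j1: "card D + 1 \<in> {1..n}" using Jn by auto
      have "x (card D + 1) < b" using inD[OF j1] bounds[OF j1] by auto
      moreover have "x i \<le> x (card D + 1)" using x_mono[of "card D + 1" i] i by auto
      ultimately have "card D + 1 \<in> inner_coords n a b x" "i \<in> inner_coords n a b x"
        using xi j1 i by (auto simp: inner_coords_def)
      then show False using card card_le_Suc0_iff_eq[of "inner_coords n a b x"] i(2) by auto
    qed
    then show ?thesis using Jn inD by (auto simp: staircase_def intro!: exI[of _ "card D"])
  qed
qed

lemma prod_transfer_le:
  fixes x :: "nat \<Rightarrow> real"
  assumes "finite A" "p \<in> A" "q \<in> A" "p \<noteq> q" "\<And>i. i \<in> A \<Longrightarrow> 0 \<le> x i" "0 \<le> \<delta>" "x q \<le> x p"
  shows "prod (x(q := x q - \<delta>, p := x p + \<delta>)) A \<le> prod x A"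
proof -
  let ?x' = "x(q := x q - \<delta>, p := x p + \<delta>)" and ?R = "A - {p} - {q}"
  have split: "prod f A = f p * f q * prod f ?R" for f :: "nat \<Rightarrow> real"
    using prod.remove[OF assms(1,2), of f] prod.remove[of "A - {p}" q f] assms(1-4)
    by (simp add: mult.assoc)
  have "?x' p * ?x' q = x p * x q - \<delta> * (x p - x q) - \<delta> * \<delta>"
    using assms(4) by (simp add: algebra_simps)
  also have "\<dots> \<le> x p * x q"
    using mult_nonneg_nonneg[OF assms(6), of "x p - x q"] mult_nonneg_nonneg[OF assms(6,6)] assms(7)
    by linarith
  finally have "?x' p * ?x' q * prod x ?R \<le> x p * x q * prod x ?R"
    using assms(5) by (intro mult_right_mono prod_nonneg) auto
  moreover have "prod ?x' ?R = prod x ?R" by (rule prod.cong) auto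
  ultimately show ?thesis unfolding split[of ?x'] split[of x] by simp
qed

lemma nonincr_transfer_inner:
  assumes xs: "nonincr n x" and pq: "p < q" "q \<le> n"
    and before_p: "\<And>i. 1 \<le> i \<Longrightarrow> i < p \<Longrightarrow> x i = b"
    and after_q: "\<And>i. q < i \<Longrightarrow> i \<le> n \<Longrightarrow> x i = a"
    and \<delta>: "0 \<le> \<delta>" "\<delta> \<le> b - x p" "\<delta> \<le> x q - a"
  shows "nonincr n (x(q := x q - \<delta>, p := x p + \<delta>))" (is "nonincr n ?x'")
  unfolding nonincr_def
proof (intro allI impI)
  fix r s :: nat assume rs: "1 \<le> r \<and> r \<le> s \<and> s \<le> n"
  consider "r = s" | "r < s" "s = p" | "r < s" "r = q" | "s \<noteq> p" "r \<noteq> q"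
    using rs by linarith
  then show "?x' s \<le> ?x' r"
  proof cases
    case 2
    then show ?thesis using before_p[of r] rs pq \<delta>(2) by auto
  next
    case 3
    then show ?thesis using after_q[of s] rs pq \<delta>(3) by auto
  next
    case 4
    then have "?x' s \<le> x s" "x r \<le> ?x' r" using \<delta>(1) pq by auto
    then show ?thesis using xs rs unfolding nonincr_def by force
  qed simp
qed

text \<open>The new vector moves mass from the last to the first inner coordinate.\<close>

lemma inner_coords_transfer_step:
  assumes xv: "isvec n x" and xs: "nonincr n x" and xb: "in_box n a b x" and "0 \<le> a"
    and card: "\<not> card (inner_coords n a b x) \<le> 1"
  obtains x' where "isvec n x'" "nonincr n x'" "in_box n a b x'" "dominates n x' x"
    "prod x' {1..n} \<le> prod x {1..n}" "card (inner_coords n a b x') < card (inner_coords n a b x)"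
proof -
  let ?I = "inner_coords n a b x"
  have x_mono: "x s \<le> x r" if "1 \<le> r" "r \<le> s" "s \<le> n" for r s
    using xs that unfolding nonincr_def by auto
  have bounds: "a \<le> x i \<and> x i \<le> b" if "i \<in> {1..n}" for i
    using xb that unfolding in_box_def by auto
  have neI: "?I \<noteq> {}" using card by (metis card.empty zero_le_one)
  define p where "p = Min ?I"
  define q where "q = Max ?I"
  have p: "p \<in> ?I" and q: "q \<in> ?I" using neI by (simp_all add: p_def q_def)
  have pq: "p < q"
  proof (rule ccontr)
    assume "\<not> p < q"
    then have "i = p" if "i \<in> ?I" for i
      using Min_le[OF finite_inner_coords that] Max_ge[OF finite_inner_coords that] \<open>\<not> p < q\<close>
      unfolding p_def q_def by linarith
    then show False using card card_le_Suc0_iff_eq[of ?I] by auto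
  qed
  have pn: "p \<in> {1..n}" and qn: "q \<in> {1..n}" using p q by (auto simp: inner_coords_def)
  have before_p: "x i = b" if "1 \<le> i" "i < p" for i
  proof -
    have "i \<notin> ?I" using Min_le[OF finite_inner_coords, of i] that unfolding p_def by fastforce
    then show ?thesis using that pn x_mono[of i p] bounds[of i] p by (auto simp: inner_coords_def)
  qed
  have after_q: "x i = a" if "q < i" "i \<le> n" for i
  proof -
    have "i \<notin> ?I" using Max_ge[OF finite_inner_coords, of i] that unfolding q_def by fastforce
    then show ?thesis using that qn x_mono[of q i] bounds[of i] q by (auto simp: inner_coords_def)
  qed
  define \<delta> where "\<delta> = min (b - x p) (x q - a)"
  have \<delta>: "0 \<le> \<delta>" "\<delta> \<le> b - x p" "\<delta> \<le> x q - a" "0 < \<delta>"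
    using p q by (auto simp: \<delta>_def inner_coords_def)
  define x' where "x' = x(q := x q - \<delta>, p := x p + \<delta>)"
  have xqp: "x q \<le> x p" using x_mono[of p q] pn qn pq by auto
  have "isvec n x'" using xv pn qn by (auto simp: isvec_def x'_def)
  moreover have "nonincr n x'"
    unfolding x'_def
    by (rule nonincr_transfer_inner[OF xs pq _ before_p after_q \<delta>(1-3)]) (use qn in auto)
  moreover have "in_box n a b x'"
    using bounds \<delta> pn qn xqp by (auto simp: in_box_def x'_def)
  moreover have "dominates n x' x"
    using prefix_sum_transfer[of q p x \<delta>] pq pn qn \<delta>(4) by (auto simp: dominates_def x'_def)
  moreover have "prod x' {1..n} \<le> prod x {1..n}"
    unfolding x'_def using pn qn pq bounds \<open>0 \<le> a\<close> \<delta>(1) xqp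
    by (intro prod_transfer_le) (auto intro: order_trans)
  moreover have "card (inner_coords n a b x') < card ?I"
  proof (rule psubset_card_mono)
    have "inner_coords n a b x' \<subseteq> ?I"
      using p q pq by (auto simp: x'_def inner_coords_def)
    moreover have "p \<notin> inner_coords n a b x' \<or> q \<notin> inner_coords n a b x'"
      using pq by (auto simp: x'_def \<delta>_def min_def inner_coords_def)
    ultimately show "inner_coords n a b x' \<subset> ?I" using p q by blast
  qed simp
  ultimately show ?thesis by (rule that)
qed

lemma staircase_dominating_exists:
  assumes "isvec n x" "nonincr n x" "in_box n a b x" "0 \<le> a" "1 \<le> n"
  shows "\<exists>x'. isvec n x' \<and> nonincr n x' \<and> in_box n a b x' \<and> (\<exists>J. staircase n a b x' J) \<and>
              dominates n x' x \<and> prod x' {1..n} \<le> prod x {1..n}"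
  using assms(1-3)
proof (induction "card (inner_coords n a b x)" arbitrary: x rule: less_induct)
  case less
  show ?case
  proof (cases "card (inner_coords n a b x) \<le> 1")
    case True
    then show ?thesis
      using staircase_if_card_inner_coords_le_1[OF less.prems(2,3) assms(5)] less.prems
      by (auto intro: dominates_refl)
  next
    case False
    obtain x' where x': "isvec n x'" "nonincr n x'" "in_box n a b x'" "dominates n x' x"
      "prod x' {1..n} \<le> prod x {1..n}" "card (inner_coords n a b x') < card (inner_coords n a b x)"
      using inner_coords_transfer_step[OF less.prems assms(4) False] by blast
    then show ?thesis
      using less.hyps[OF x'(6) x'(1-3)] by (meson dominates_trans order_trans)
  qed
qed

section \<open>Sorted staircase points of \<open>S\<close> lie in the convex hull of \<open>T\<close>\<close>

definition setT :: "nat \<Rightarrow> nat \<Rightarrow> real \<Rightarrow> real \<Rightarrow> real \<Rightarrow> real \<Rightarrow> real \<Rightarrow> real \<Rightarrow> nat \<Rightarrow>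
    ((nat \<Rightarrow> real) \<times> (nat \<Rightarrow> real)) set" where
  "setT n m a b c d \<alpha> \<beta> k = (\<Union>i\<in>{0..m-k}. \<Union>j\<in>{0..n-1}. setSij n m a b c d \<alpha> \<beta> k i j)
                \<union> (\<Union>j\<in>{0..n}. setC n m a b c d \<alpha> \<beta> j)"

lemma linear_le_powr_inverse:
  fixes w g :: real
  assumes "0 < g" "g \<le> 1" "0 < w"
  shows "1 + (w - 1) / g \<le> w powr (1 / g)"
proof -
  let ?A = "w powr (1 / g)"
  have A: "?A > 0" using assms by simp
  have "?A powr g * 1 powr (1 - g) \<le> g * ?A + (1 - g) * 1"
    by (rule Youngs_inequality_0) (use assms A in auto)
  moreover have "?A powr g = w" using assms by (simp add: powr_powr)
  ultimately have "w \<le> g * ?A + (1 - g)" by simp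
  then have "w - 1 + g \<le> g * ?A" by simp
  then have "(w - 1 + g) / g \<le> ?A" using assms(1) by (simp add: divide_le_eq mult.commute)
  moreover have "(w - 1 + g) / g = 1 + (w - 1) / g" using assms(1) by (simp add: field_simps)
  ultimately show ?thesis by simp
qed

lemma sorted_few_inner_coords:
  assumes "c < d" and ys: "nonincr m y" and yb: "in_box m c d y"
    and few: "card (inner_coords m c d y) \<le> k" and "k \<le> m"
  obtains i where "i \<le> m - k" "\<And>r. r \<in> {1..m} \<Longrightarrow> r \<le> i \<Longrightarrow> y r = d"
    "\<And>r. r \<in> {1..m} \<Longrightarrow> i + k + 1 \<le> r \<Longrightarrow> y r = c"
proof -
  have y_mono: "y s \<le> y r" if "1 \<le> r" "r \<le> s" "s \<le> m" for r s
    using ys that unfolding nonincr_def by auto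
  have y_bounds: "c \<le> y i \<and> y i \<le> d" if "i \<in> {1..m}" for i
    using yb that by (auto simp: in_box_def)
  define Ds where "Ds = {r\<in>{1..m}. y r = d}"
  define Es where "Es = {r\<in>{1..m}. c < y r}"
  have Ds: "Ds = {1..card Ds}"
    by (rule prefix_closed_eq_atLeastAtMost) (use y_mono y_bounds in \<open>auto simp: Ds_def\<close>, fastforce)
  have Es: "Es = {1..card Es}"
    by (rule prefix_closed_eq_atLeastAtMost) (use y_mono y_bounds in \<open>auto simp: Es_def\<close>, fastforce)
  have DE: "Ds \<subseteq> Es" using assms(1) by (auto simp: Ds_def Es_def)
  have "inner_coords m c d y = Es - Ds" using y_bounds by (force simp: inner_coords_def Ds_def Es_def)
  then have cI: "card (inner_coords m c d y) = card Es - card Ds"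
    using card_Diff_subset[OF _ DE] by (simp add: Ds_def)
  have cDE: "card Ds \<le> card Es" by (rule card_mono) (use DE in \<open>auto simp: Es_def\<close>)
  define i where "i = min (card Ds) (m - k)"
  have hi1: "y r = d" if "r \<in> {1..m}" "r \<le> i" for r
  proof -
    have "r \<in> Ds" using that by (subst Ds) (auto simp: i_def)
    then show ?thesis by (simp add: Ds_def)
  qed
  have hi2: "y r = c" if "r \<in> {1..m}" "i + k + 1 \<le> r" for r
  proof (cases "card Ds \<le> m - k")
    case True
    then have "card Es + 1 \<le> r" using that few cI cDE by (simp add: i_def)
    then have "r \<notin> Es" by (subst Es) auto
    then show ?thesis using y_bounds[OF that(1)] that(1) by (simp add: Es_def)
  next
    case False
    then show ?thesis using that \<open>k \<le> m\<close> by (simp add: i_def)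
  qed
  show ?thesis using that[of i] hi1 hi2 by (simp add: i_def)
qed

lemma staircase_in_setT:
  assumes "c < d" "k \<le> m"
    and S: "(x, y) \<in> setS n m a b c d \<alpha> \<beta>" and sh: "staircase n a b x J" and ys: "nonincr m y"
    and cs: "x (J + 1) = a \<or> x (J + 1) = b \<or> card (inner_coords m c d y) \<le> k"
  shows "(x, y) \<in> setT n m a b c d \<alpha> \<beta> k"
proof -
  have H: "(x, y) \<in> boxH n m a b c d" using S by (simp add: setS_def)
  have J: "J < n" using sh by (simp add: staircase_def)
  have xlo: "x i = b" if "i \<in> {1..n}" "i \<le> J" for i using sh that by (simp add: staircase_def)
  have xhi: "x i = a" if "i \<in> {1..n}" "J + 2 \<le> i" for i using sh that by (simp add: staircase_def)
  consider "x (J + 1) = a" | "x (J + 1) = b" | "card (inner_coords m c d y) \<le> k"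
    using cs by blast
  then show ?thesis
  proof cases
    case 1
    have "(x, y) \<in> setC n m a b c d \<alpha> \<beta> J"
      unfolding setC_def using S H ys xlo xhi 1
      by (auto simp: Suc_le_eq) (metis Suc_eq_plus1 le_neq_implies_less Suc_leI add_2_eq_Suc')
    then show ?thesis using J by (auto simp: setT_def)
  next
    case 2
    have "(x, y) \<in> setC n m a b c d \<alpha> \<beta> (J + 1)"
      unfolding setC_def using S H ys xlo xhi 2
      by (auto simp: le_Suc_eq)
    then show ?thesis using J by (auto simp: setT_def)
  next
    case 3
    obtain i where "i \<le> m - k" and hi1: "\<And>r. r \<in> {1..m} \<Longrightarrow> r \<le> i \<Longrightarrow> y r = d"
      and hi2: "\<And>r. r \<in> {1..m} \<Longrightarrow> i + k + 1 \<le> r \<Longrightarrow> y r = c"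
      using sorted_few_inner_coords[OF assms(1) ys _ 3 assms(2)] boxH_D[OF H] by blast
    have "(x, y) \<in> setSij n m a b c d \<alpha> \<beta> k i J"
      unfolding setSij_def using S H ys xlo xhi hi1 hi2 by (auto simp: Suc_le_eq)
    moreover have "i \<in> {0..m-k}" "J \<in> {0..n-1}" using J \<open>i \<le> m - k\<close> by auto
    ultimately show ?thesis by (auto simp: setT_def)
  qed
qed

lemma prod_indicator_power:
  fixes m :: nat
  assumes "I \<subseteq> {1..m}"
  shows "(\<Prod>r=1..m. if r \<in> I then w else 1) = (w::real) ^ card I"
  using prod.inter_restrict[of "{1..m}" "\<lambda>_. w" I] assms
  by (simp add: Int_absorb1)

lemma powr_le_power_powr_scaled:
  fixes g \<alpha> \<beta> \<mu> :: real
  assumes g: "0 < g" "g < 1" and "0 < \<beta>" and N: "real N * \<alpha> = \<beta> / g" and "-1 \<le> \<mu>"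
  shows "(1 + \<mu>) powr \<beta> \<le> ((1 + g * \<mu>) powr \<alpha>) ^ N"
proof -
  have W0: "0 < 1 + g * \<mu>"
    using mult_left_mono[OF assms(5), of g] g by simp
  have "((1 + g * \<mu>) powr \<alpha>) ^ N = (1 + g * \<mu>) powr (real N * \<alpha>)"
    using W0 by (simp add: powr_realpow[symmetric] powr_powr mult.commute)
  also have "\<dots> = ((1 + g * \<mu>) powr (1 / g)) powr \<beta>"
    by (simp add: N powr_powr)
  finally have e: "((1 + g * \<mu>) powr \<alpha>) ^ N = ((1 + g * \<mu>) powr (1 / g)) powr \<beta>" .
  have "1 + ((1 + g * \<mu>) - 1) / g \<le> (1 + g * \<mu>) powr (1 / g)"
    by (rule linear_le_powr_inverse) (use g W0 in auto)
  then have "1 + \<mu> \<le> (1 + g * \<mu>) powr (1 / g)" using g by simp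
  with assms(3,5) show ?thesis unfolding e by (intro powr_mono2) auto
qed

definition perturb_x :: "(nat \<Rightarrow> real) \<Rightarrow> nat \<Rightarrow> real \<Rightarrow> nat \<Rightarrow> real" where
  "perturb_x x J \<mu> = x(J + 1 := x (J + 1) * (1 + \<mu>))"

definition perturb_y :: "nat set \<Rightarrow> real \<Rightarrow> (nat \<Rightarrow> real) \<Rightarrow> real \<Rightarrow> nat \<Rightarrow> real" where
  "perturb_y I g y \<mu> r = (if r \<in> I then y r * (1 + g * \<mu>) else y r)"

lemma perturbation_convex_comb:
  assumes "\<theta> * \<mu>1 + (1 - \<theta>) * \<mu>2 = 0"
  shows "\<theta> *\<^sub>R (perturb_x x J \<mu>1, perturb_y I g y \<mu>1) + (1 - \<theta>) *\<^sub>R (perturb_x x J \<mu>2, perturb_y I g y \<mu>2)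
    = (x, y)"
proof -
  have "\<theta> * (1 + g * \<mu>1) + (1 - \<theta>) * (1 + g * \<mu>2) = 1 + g * (\<theta> * \<mu>1 + (1 - \<theta>) * \<mu>2)" for g
    by (simp add: algebra_simps)
  then have one: "\<theta> * (1 + g * \<mu>1) + (1 - \<theta>) * (1 + g * \<mu>2) = 1" for g
    using assms by simp
  have comb: "\<theta> * (z * (1 + g * \<mu>1)) + (1 - \<theta>) * (z * (1 + g * \<mu>2)) = z" for z g
    using one[of g] by (metis (no_types, lifting) distrib_left mult.left_commute mult.right_neutral)
  have "\<theta> * z + (1 - \<theta>) * z = z" for z :: real by (simp add: algebra_simps)
  with comb comb[of _ 1, simplified] show ?thesis
    by (simp add: fun_eq_iff perturb_x_def perturb_y_def)
qed

lemma nonincr_perturb_y: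
  assumes ys: "nonincr m y" and yb: "in_box m c d y" and W0: "0 < 1 + g * \<mu>"
    and \<mu>: "\<And>r. r \<in> inner_coords m c d y \<Longrightarrow> c \<le> y r * (1 + g * \<mu>) \<and> y r * (1 + g * \<mu>) \<le> d"
  shows "nonincr m (perturb_y (inner_coords m c d y) g y \<mu>)" (is "nonincr m ?Y")
  unfolding nonincr_def
proof (intro allI impI)
  let ?I = "inner_coords m c d y"
  fix r s :: nat assume rs: "1 \<le> r \<and> r \<le> s \<and> s \<le> m"
  have yrs: "y s \<le> y r" using ys rs unfolding nonincr_def by auto
  have yb': "c \<le> y i \<and> y i \<le> d" if "i \<in> {1..m}" for i using yb that by (auto simp: in_box_def)
  consider "r \<in> ?I" "s \<in> ?I" | "r \<in> ?I" "s \<notin> ?I" | "r \<notin> ?I" "s \<in> ?I" | "r \<notin> ?I" "s \<notin> ?I"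
    by blast
  then show "?Y s \<le> ?Y r"
  proof cases
    case 1
    then show ?thesis using yrs W0 by (simp add: perturb_y_def mult_right_mono)
  next
    case 2
    have "y s < d" using yrs 2(1) by (simp add: inner_coords_def)
    then have "y s = c" using 2(2) rs yb'[of s] by (auto simp: inner_coords_def)
    then show ?thesis using 2 \<mu>[of r] by (simp add: perturb_y_def)
  next
    case 3
    have "c < y r" using yrs 3(2) by (simp add: inner_coords_def)
    then have "y r = d" using 3(1) rs yb'[of r] by (auto simp: inner_coords_def)
    then show ?thesis using 3 \<mu>[of s] by (simp add: perturb_y_def)
  next
    case 4
    then show ?thesis using yrs by (simp add: perturb_y_def)
  qed
qed

text \<open>Since \<open>N \<alpha> = \<beta> / g\<close> for the number \<open>N\<close> of inner coordinates of \<open>y\<close>, the estimate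
  \<open>powr_le_power_powr_scaled\<close> shows that the perturbation preserves the inequality defining \<open>S\<close>.\<close>

lemma perturbation_in_setS:
  assumes S: "(x, y) \<in> setS n m a b c d \<alpha> \<beta>" and sh: "staircase n a b x J" and ys: "nonincr m y"
    and "0 \<le> a" "0 \<le> c" "0 < \<beta>"
    and g: "0 < g" "g < 1" "real (card (inner_coords m c d y)) * \<alpha> = \<beta> / g"
    and \<mu>: "-1 \<le> \<mu>" "a \<le> x (J + 1) * (1 + \<mu>)" "x (J + 1) * (1 + \<mu>) \<le> b"
      "\<And>r. r \<in> inner_coords m c d y \<Longrightarrow> c \<le> y r * (1 + g * \<mu>) \<and> y r * (1 + g * \<mu>) \<le> d"
  defines "I \<equiv> inner_coords m c d y"
  shows "(perturb_x x J \<mu>, perturb_y I g y \<mu>) \<in> setS n m a b c d \<alpha> \<beta>"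
    and "staircase n a b (perturb_x x J \<mu>) J" and "nonincr m (perturb_y I g y \<mu>)"
    and "inner_coords m c d (perturb_y I g y \<mu>) \<subseteq> I"
proof -
  let ?X = "perturb_x x J \<mu>" and ?Y = "perturb_y I g y \<mu>"
  have H: "(x, y) \<in> boxH n m a b c d" using S by (simp add: setS_def)
  have J1: "J + 1 \<in> {1..n}" using sh by (simp add: staircase_def)
  have xb: "a \<le> x i \<and> x i \<le> b" if "i \<in> {1..n}" for i
    using boxH_D[OF H] that by (auto simp: in_box_def)
  have yb: "c \<le> y r \<and> y r \<le> d" if "r \<in> {1..m}" for r
    using boxH_D[OF H] that by (auto simp: in_box_def)
  have yI: "c < y r" "y r < d" "r \<in> {1..m}" if "r \<in> I" for r
    using that by (auto simp: I_def inner_coords_def)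
  have W0: "0 < 1 + g * \<mu>" using mult_left_mono[OF \<mu>(1), of g] g by simp
  have "isvec n ?X" using boxH_D[OF H] J1 by (auto simp: isvec_def perturb_x_def)
  moreover have "isvec m ?Y" using boxH_D[OF H] yI by (auto simp: isvec_def perturb_y_def)
  moreover have "a \<le> ?X i \<and> ?X i \<le> b" if "i \<in> {1..n}" for i
    using xb[OF that] \<mu>(2,3) by (cases "i = J + 1") (simp_all add: perturb_x_def)
  moreover have "c \<le> ?Y r \<and> ?Y r \<le> d" if "r \<in> {1..m}" for r
    using yb[OF that] \<mu>(4)[of r] by (cases "r \<in> I") (simp_all add: perturb_y_def I_def)
  ultimately have "(?X, ?Y) \<in> boxH n m a b c d" by (simp add: boxH_def)
  moreover have "(\<Prod>j=1..n. ?X j powr \<beta>) \<le> (\<Prod>r=1..m. ?Y r powr \<alpha>)"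
  proof -
    have "(\<Prod>j=1..n. ?X j powr \<beta>)
        = (\<Prod>j=1..n. x j powr \<beta> * (if j = J + 1 then (1 + \<mu>) powr \<beta> else 1))"
      using xb[OF J1] \<open>0 \<le> a\<close> \<mu>(1) by (intro prod.cong) (auto simp: perturb_x_def powr_mult)
    also have "\<dots> = (\<Prod>j=1..n. x j powr \<beta>) * (1 + \<mu>) powr \<beta>"
      using J1 by (simp add: prod.distrib)
    also have "\<dots> \<le> (\<Prod>r=1..m. y r powr \<alpha>) * ((1 + g * \<mu>) powr \<alpha>) ^ card I"
      using S g \<open>0 < \<beta>\<close> \<mu>(1) unfolding I_def setS_def
      by (intro mult_mono powr_le_power_powr_scaled) (auto intro: prod_nonneg)
    also have "\<dots> = (\<Prod>r=1..m. y r powr \<alpha>) * (\<Prod>r=1..m. if r \<in> I then (1 + g * \<mu>) powr \<alpha> else 1)"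
      using prod_indicator_power[of I m "(1 + g * \<mu>) powr \<alpha>"] yI(3) by (simp add: subset_iff)
    also have "\<dots> = (\<Prod>r=1..m. y r powr \<alpha> * (if r \<in> I then (1 + g * \<mu>) powr \<alpha> else 1))"
      by (simp add: prod.distrib)
    also have "\<dots> = (\<Prod>r=1..m. ?Y r powr \<alpha>)"
      using yI \<open>0 \<le> c\<close> W0 by (intro prod.cong) (auto simp: perturb_y_def powr_mult)
    finally show ?thesis .
  qed
  ultimately show "(?X, ?Y) \<in> setS n m a b c d \<alpha> \<beta>" by (simp add: setS_def)
  show "staircase n a b ?X J" using sh by (auto simp: staircase_def perturb_x_def)
  show "inner_coords m c d ?Y \<subseteq> I"
    by (auto simp: inner_coords_def perturb_y_def I_def split: if_splits)
  show "nonincr m ?Y"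
    unfolding I_def using boxH_D[OF H] by (intro nonincr_perturb_y[OF ys _ W0 \<mu>(4)]) auto
qed

lemma interval_constraints_range:
  fixes lo hi :: "'a \<Rightarrow> real"
  assumes "finite A" "A \<noteq> {}" "\<And>i. i \<in> A \<Longrightarrow> lo i < 0 \<and> 0 < hi i"
  obtains \<mu>1 \<mu>2 where "\<mu>1 < 0" "0 < \<mu>2" "\<And>\<mu> i. \<mu>1 \<le> \<mu> \<Longrightarrow> \<mu> \<le> \<mu>2 \<Longrightarrow> i \<in> A \<Longrightarrow> lo i \<le> \<mu> \<and> \<mu> \<le> hi i"
    "\<exists>i\<in>A. \<mu>1 = lo i" "\<exists>i\<in>A. \<mu>2 = hi i"
proof
  show "Max (lo ` A) < 0" "0 < Min (hi ` A)" using assms by auto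
  have "Max (lo ` A) \<in> lo ` A" "Min (hi ` A) \<in> hi ` A" using assms(1,2) by simp_all
  then show "\<exists>i\<in>A. Max (lo ` A) = lo i" "\<exists>i\<in>A. Min (hi ` A) = hi i" by auto
  fix \<mu> i assume "Max (lo ` A) \<le> \<mu>" "\<mu> \<le> Min (hi ` A)" "i \<in> A"
  then show "lo i \<le> \<mu> \<and> \<mu> \<le> hi i" using assms(1) by (meson Max_ge Min_le finite_imageI imageI order_trans)
qed

lemma perturbation_range:
  fixes y :: "nat \<Rightarrow> real"
  assumes t: "a < t" "t < b" and "0 \<le> a" "0 \<le> c" "0 < g"
    and I: "finite I" "0 \<notin> I" "\<And>r. r \<in> I \<Longrightarrow> c < y r \<and> y r < d"
  obtains \<mu>1 \<mu>2 where "\<mu>1 < 0" "0 < \<mu>2"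
    "\<And>\<mu>. \<mu>1 \<le> \<mu> \<Longrightarrow> \<mu> \<le> \<mu>2 \<Longrightarrow> -1 \<le> \<mu> \<and> a \<le> t * (1 + \<mu>) \<and> t * (1 + \<mu>) \<le> b \<and>
        (\<forall>r\<in>I. c \<le> y r * (1 + g * \<mu>) \<and> y r * (1 + g * \<mu>) \<le> d)"
    "\<And>\<mu>. \<mu> \<in> {\<mu>1, \<mu>2} \<Longrightarrow> t * (1 + \<mu>) \<in> {a, b} \<or> (\<exists>r\<in>I. y r * (1 + g * \<mu>) \<in> {c, d})"
proof -
  have t0: "0 < t" using t \<open>0 \<le> a\<close> by simp
  have y0: "0 < y r" if "r \<in> I" for r using I(3)[OF that] \<open>0 \<le> c\<close> by simp
  \<comment> \<open>Index \<open>0\<close> stands for the constraint on the free coordinate of the staircase.\<close>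
  define lo where "lo r = (if r = 0 then (a - t) / t else (c - y r) / (g * y r))" for r
  define hi where "hi r = (if r = 0 then (b - t) / t else (d - y r) / (g * y r))" for r
  have "lo r < 0 \<and> 0 < hi r" if "r \<in> insert 0 I" for r
    using that t t0 I(3)[of r] y0[of r] \<open>0 < g\<close> by (auto simp: lo_def hi_def divide_neg_pos)
  then obtain \<mu>1 \<mu>2 where \<mu>12: "\<mu>1 < 0" "0 < \<mu>2"
    and range: "\<And>\<mu> r. \<mu>1 \<le> \<mu> \<Longrightarrow> \<mu> \<le> \<mu>2 \<Longrightarrow> r \<in> insert 0 I \<Longrightarrow> lo r \<le> \<mu> \<and> \<mu> \<le> hi r"
    and tight: "\<exists>r\<in>insert 0 I. \<mu>1 = lo r" "\<exists>r\<in>insert 0 I. \<mu>2 = hi r"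
    using interval_constraints_range[of "insert 0 I" lo hi] I(1) by blast
  show ?thesis
  proof (rule that[OF \<mu>12])
    fix \<mu> assume \<mu>: "\<mu>1 \<le> \<mu>" "\<mu> \<le> \<mu>2"
    have "-1 \<le> lo 0" using t0 \<open>0 \<le> a\<close> by (simp add: lo_def field_simps)
    moreover have "a \<le> t * (1 + \<mu>) \<and> t * (1 + \<mu>) \<le> b"
      using range[OF \<mu>, of 0] t0 by (auto simp: lo_def hi_def field_simps)
    moreover have "c \<le> y r * (1 + g * \<mu>) \<and> y r * (1 + g * \<mu>) \<le> d" if "r \<in> I" for r
    proof -
      have "r \<noteq> 0"
      proof
        assume "r = 0"
        with that I(2) show False by simp
      qed
      then show ?thesis using range[OF \<mu>, of r] that y0[OF that] \<open>0 < g\<close>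
        by (auto simp: lo_def hi_def field_simps)
    qed
    ultimately show "-1 \<le> \<mu> \<and> a \<le> t * (1 + \<mu>) \<and> t * (1 + \<mu>) \<le> b \<and>
        (\<forall>r\<in>I. c \<le> y r * (1 + g * \<mu>) \<and> y r * (1 + g * \<mu>) \<le> d)"
      using range[OF \<mu>, of 0] by auto
  next
    fix \<mu> assume "\<mu> \<in> {\<mu>1, \<mu>2}"
    then obtain r where r: "r \<in> insert 0 I" "\<mu> = lo r \<or> \<mu> = hi r" using tight by blast
    show "t * (1 + \<mu>) \<in> {a, b} \<or> (\<exists>r\<in>I. y r * (1 + g * \<mu>) \<in> {c, d})"
    proof (cases "r = 0")
      case True
      then show ?thesis using r(2) t0 by (auto simp: lo_def hi_def field_simps)
    next
      case False
      then have "r \<in> I" using r(1) by simp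
      then show ?thesis using False r(2) y0[of r] \<open>0 < g\<close> by (auto simp: lo_def hi_def field_simps)
    qed
  qed
qed

text \<open>If the staircase point is not
  already in \<open>T\<close>, then \<open>y\<close> has more than \<open>\<lfloor>\<beta>/\<alpha>\<rfloor>\<close> inner coordinates, so \<open>g < 1\<close> below, and the
  perturbation can be pushed in both directions until a coordinate hits the boundary of the box.\<close>

lemma sorted_staircase_in_hull_setT:
  assumes a0: "0 \<le> a" and c0: "0 \<le> c" and cd: "c < d"
    and al: "\<alpha> > 0" and be: "\<beta> > 0" and kdef: "k = min m (nat \<lfloor>\<beta> / \<alpha>\<rfloor>)"
  shows "(x, y) \<in> setS n m a b c d \<alpha> \<beta> \<Longrightarrow> staircase n a b x J \<Longrightarrow> nonincr m y \<Longrightarrow>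
         (x, y) \<in> convex hull setT n m a b c d \<alpha> \<beta> k"
proof (induction "card (inner_coords m c d y)" arbitrary: x y rule: less_induct)
  case less
  define I where "I = inner_coords m c d y"
  define t where "t = x (J + 1)"
  have km: "k \<le> m" using kdef by simp
  have H: "(x, y) \<in> boxH n m a b c d" using less.prems(1) by (simp add: setS_def)
  have J1: "J + 1 \<in> {1..n}" using less.prems(2) by (simp add: staircase_def)
  have tb: "a \<le> t" "t \<le> b" using boxH_D[OF H] J1 by (auto simp: in_box_def t_def)
  show ?case
  proof (cases "t = a \<or> t = b \<or> card I \<le> k")
    case True
    then show ?thesis
      using staircase_in_setT[OF cd km less.prems] by (auto simp: t_def I_def intro: hull_inc)
  next
    case False
    then have ta: "a < t" "t < b" and Nk: "k < card I" using tb by auto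
    have "card I \<le> card {1..m}" by (rule card_mono) (auto simp: I_def inner_coords_def)
    then have "k = nat \<lfloor>\<beta> / \<alpha>\<rfloor>" using kdef Nk by simp
    then have "\<lfloor>\<beta> / \<alpha>\<rfloor> < int (card I)" using Nk by linarith
    then have "\<beta> / \<alpha> < real (card I)" by (simp add: floor_less_iff)
    then have bN: "\<beta> < real (card I) * \<alpha>" using al by (simp add: divide_less_eq)
    define g where "g = \<beta> / (real (card I) * \<alpha>)"
    have g: "0 < g" "g < 1" "real (card I) * \<alpha> = \<beta> / g"
      using be bN Nk al by (auto simp: g_def divide_less_eq)
    obtain \<mu>1 \<mu>2 where \<mu>12: "\<mu>1 < 0" "0 < \<mu>2"
      and range: "\<And>\<mu>. \<mu>1 \<le> \<mu> \<Longrightarrow> \<mu> \<le> \<mu>2 \<Longrightarrow> -1 \<le> \<mu> \<and> a \<le> t * (1 + \<mu>) \<and> t * (1 + \<mu>) \<le> b \<and>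
          (\<forall>r\<in>I. c \<le> y r * (1 + g * \<mu>) \<and> y r * (1 + g * \<mu>) \<le> d)"
      and tight: "\<And>\<mu>. \<mu> \<in> {\<mu>1, \<mu>2} \<Longrightarrow>
          t * (1 + \<mu>) \<in> {a, b} \<or> (\<exists>r\<in>I. y r * (1 + g * \<mu>) \<in> {c, d})"
      by (rule perturbation_range[OF ta a0 c0 g(1), of I y d]) (auto simp: I_def inner_coords_def)
    have in_hull: "(perturb_x x J \<mu>, perturb_y I g y \<mu>) \<in> convex hull setT n m a b c d \<alpha> \<beta> k"
      if \<mu>: "\<mu> \<in> {\<mu>1, \<mu>2}" for \<mu>
    proof -
      have "\<mu>1 \<le> \<mu>" "\<mu> \<le> \<mu>2" using \<mu> \<mu>12 by auto
      note R = range[OF this]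
      have ymu: "c \<le> y r * (1 + g * \<mu>) \<and> y r * (1 + g * \<mu>) \<le> d" if "r \<in> inner_coords m c d y" for r
        using R that unfolding I_def by blast
      have m1: "-1 \<le> \<mu>" and tmu: "a \<le> x (J + 1) * (1 + \<mu>)" "x (J + 1) * (1 + \<mu>) \<le> b"
        using R by (simp_all add: t_def)
      note P = perturbation_in_setS[OF less.prems a0 c0 be g[unfolded I_def] m1 tmu ymu, folded I_def]
      consider "t * (1 + \<mu>) \<in> {a, b}" | r where "r \<in> I" "perturb_y I g y \<mu> r \<in> {c, d}"
        using tight[OF \<mu>] by (auto simp: perturb_y_def)
      then show ?thesis
      proof cases
        case 1
        then have "perturb_x x J \<mu> (J + 1) = a \<or> perturb_x x J \<mu> (J + 1) = b"
          by (simp add: perturb_x_def t_def)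
        then show ?thesis using staircase_in_setT[OF cd km P(1-3)] by (blast intro: hull_inc)
      next
        case (2 r)
        have "r \<notin> inner_coords m c d (perturb_y I g y \<mu>)" using 2(2) by (auto simp: inner_coords_def)
        then have "inner_coords m c d (perturb_y I g y \<mu>) \<subseteq> I - {r}" using P(4) by blast
        moreover have fI: "finite I" by (simp add: I_def)
        ultimately have "card (inner_coords m c d (perturb_y I g y \<mu>)) \<le> card (I - {r})"
          by (intro card_mono) auto
        also have "\<dots> < card I" using card_Diff1_less[OF fI 2(1)] .
        finally show ?thesis using less.hyps[OF _ P(1-3)] by (simp add: I_def)
      qed
    qed
    define \<theta> where "\<theta> = \<mu>2 / (\<mu>2 - \<mu>1)"
    have \<theta>: "0 \<le> \<theta>" "0 \<le> 1 - \<theta>" "\<theta> * \<mu>1 + (1 - \<theta>) * \<mu>2 = 0"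
      using \<mu>12 by (auto simp: \<theta>_def field_simps)
    have "(perturb_x x J \<mu>1, perturb_y I g y \<mu>1) \<in> convex hull setT n m a b c d \<alpha> \<beta> k"
      "(perturb_x x J \<mu>2, perturb_y I g y \<mu>2) \<in> convex hull setT n m a b c d \<alpha> \<beta> k"
      by (simp_all add: in_hull)
    then have "\<theta> *\<^sub>R (perturb_x x J \<mu>1, perturb_y I g y \<mu>1) + (1 - \<theta>) *\<^sub>R (perturb_x x J \<mu>2, perturb_y I g y \<mu>2)
        \<in> convex hull setT n m a b c d \<alpha> \<beta> k"
      by (rule convexD[OF convex_convex_hull]) (use \<theta> in auto)
    then show ?thesis unfolding perturbation_convex_comb[OF \<theta>(3)] .
  qed
qed

section \<open>The convex hull of \<open>S\<close> via majorization\<close>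

lemma nonincr_staircase_pattern:
  assumes "\<forall>s\<in>{1..n}. s \<le> j \<longrightarrow> x s = b" "\<forall>s\<in>{1..n}. j + 2 \<le> s \<longrightarrow> x s = a" "in_box n a b x"
  shows "nonincr n x"
  unfolding nonincr_def
proof (intro allI impI)
  fix r s :: nat assume rs: "1 \<le> r \<and> r \<le> s \<and> s \<le> n"
  have bx: "a \<le> x i \<and> x i \<le> b" if "i \<in> {1..n}" for i using assms(3) that by (auto simp: in_box_def)
  show "x s \<le> x r"
  proof (cases "r \<le> j")
    case True then show ?thesis using assms(1) bx[of s] rs by auto
  next
    case False
    then have "s = r \<or> j + 2 \<le> s" using rs by (cases "r = j + 1") auto
    moreover have "j + 2 \<le> r \<Longrightarrow> x r = a" using assms(2) rs by auto
    ultimately show ?thesis using assms(2) bx[of r] rs by auto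
  qed
qed

lemma setT_subset_setS: "setT n m a b c d \<alpha> \<beta> k \<subseteq> setS n m a b c d \<alpha> \<beta>"
  by (auto simp: setT_def setSij_def setC_def)

lemma setT_sorted:
  "setT n m a b c d \<alpha> \<beta> k \<subseteq> {(u, v). isvec n u \<and> isvec m v \<and> nonincr n u \<and> nonincr m v}"
proof
  fix z assume z: "z \<in> setT n m a b c d \<alpha> \<beta> k"
  obtain u v where zuv: "z = (u, v)" by (cases z)
  have H: "(u, v) \<in> boxH n m a b c d" using z zuv setT_subset_setS[of n m a b c d \<alpha> \<beta> k]
    by (auto simp: setS_def)
  have vs: "nonincr m v" using z zuv by (auto simp: setT_def setSij_def setC_def)
  have "\<exists>j. (\<forall>s\<in>{1..n}. s \<le> j \<longrightarrow> u s = b) \<and> (\<forall>s\<in>{1..n}. j + 2 \<le> s \<longrightarrow> u s = a)"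
    using z zuv by (auto simp: setT_def setSij_def setC_def)
  then have "nonincr n u" using nonincr_staircase_pattern boxH_D[OF H] by blast
  then show "z \<in> {(u, v). isvec n u \<and> isvec m v \<and> nonincr n u \<and> nonincr m v}"
    using zuv vs boxH_D[OF H] by auto
qed

lemma hull_setT_sorted:
  "convex hull setT n m a b c d \<alpha> \<beta> k \<subseteq> {(u, v). isvec n u \<and> isvec m v \<and> nonincr n u \<and> nonincr m v}"
proof (rule hull_minimal[OF setT_sorted])
  show "convex {(u, v). isvec n u \<and> isvec m v \<and> nonincr n u \<and> nonincr m v}"
    unfolding convex_def by (auto intro!: isvec_lincomb nonincr_convex_comb)
qed

definition setR :: "nat \<Rightarrow> nat \<Rightarrow> real \<Rightarrow> real \<Rightarrow> real \<Rightarrow> real \<Rightarrow> real \<Rightarrow> real \<Rightarrow> nat \<Rightarrow>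
    ((nat \<Rightarrow> real) \<times> (nat \<Rightarrow> real)) set" where
  "setR n m a b c d \<alpha> \<beta> k = {(x, y). isvec n x \<and> isvec m y \<and>
     (\<exists>u v. majorizes m v y \<and> majorizes n u x \<and> isvec n u \<and> isvec m v \<and>
            (u, v) \<in> convex hull setT n m a b c d \<alpha> \<beta> k)}"

lemma convex_setR: "convex (setR n m a b c d \<alpha> \<beta> k)"
proof (rule convexI)
  fix z1 z2 and s t :: real
  assume z1: "z1 \<in> setR n m a b c d \<alpha> \<beta> k" and z2: "z2 \<in> setR n m a b c d \<alpha> \<beta> k"
    and st0: "0 \<le> s" "0 \<le> t" "s + t = 1"
  then have st: "0 \<le> s \<and> 0 \<le> t \<and> s + t = 1" by simp
  obtain x1 y1 u1 v1 where A: "z1 = (x1, y1)" "isvec n x1" "isvec m y1" "majorizes m v1 y1"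
    "majorizes n u1 x1" "isvec n u1" "isvec m v1" "(u1, v1) \<in> convex hull setT n m a b c d \<alpha> \<beta> k"
    using z1 by (auto simp: setR_def)
  obtain x2 y2 u2 v2 where B: "z2 = (x2, y2)" "isvec n x2" "isvec m y2" "majorizes m v2 y2"
    "majorizes n u2 x2" "isvec n u2" "isvec m v2" "(u2, v2) \<in> convex hull setT n m a b c d \<alpha> \<beta> k"
    using z2 by (auto simp: setR_def)
  have s1: "nonincr n u1" "nonincr m v1" using A(8) hull_setT_sorted by blast+
  have s2: "nonincr n u2" "nonincr m v2" using B(8) hull_setT_sorted by blast+
  have "s *\<^sub>R (u1, v1) + t *\<^sub>R (u2, v2) \<in> convex hull setT n m a b c d \<alpha> \<beta> k"
    by (rule convexD[OF convex_convex_hull A(8) B(8)]) (use st in auto)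
  then have uvc: "(s *\<^sub>R u1 + t *\<^sub>R u2, s *\<^sub>R v1 + t *\<^sub>R v2) \<in> convex hull setT n m a b c d \<alpha> \<beta> k"
    by simp
  have mu: "majorizes n (s *\<^sub>R u1 + t *\<^sub>R u2) (s *\<^sub>R x1 + t *\<^sub>R x2)"
    by (rule majorizes_convex_comb) (use s1 s2 A B st in auto)
  have mv: "majorizes m (s *\<^sub>R v1 + t *\<^sub>R v2) (s *\<^sub>R y1 + t *\<^sub>R y2)"
    by (rule majorizes_convex_comb) (use s1 s2 A B st in auto)
  show "s *\<^sub>R z1 + t *\<^sub>R z2 \<in> setR n m a b c d \<alpha> \<beta> k"
    unfolding A(1) B(1) setR_def
    using uvc mu mv A B by (auto intro!: isvec_lincomb)
qed

lemma prod_powr_mono: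
  assumes "\<And>j. j \<in> {1..n} \<Longrightarrow> 0 \<le> u j" "prod u {1..n} \<le> prod x {1..(n::nat)}" "0 \<le> \<beta>"
  shows "(\<Prod>j=1..n. u j powr \<beta>) \<le> (\<Prod>j=1..n. x j powr (\<beta>::real))"
proof -
  have "(\<Prod>j=1..n. u j powr \<beta>) = (prod u {1..n}) powr \<beta>" by (simp add: prod_powr_distrib)
  also have "\<dots> \<le> (prod x {1..n}) powr \<beta>"
    by (rule powr_mono2) (use assms in \<open>auto intro: prod_nonneg\<close>)
  also have "\<dots> = (\<Prod>j=1..n. x j powr \<beta>)" by (simp add: prod_powr_distrib)
  finally show ?thesis .
qed

lemma setS_subset_setR:
  assumes n1: "1 \<le> n" and a0: "0 \<le> a" and c0: "0 \<le> c" and cd: "c < d"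
    and al: "\<alpha> > 0" and be: "\<beta> > 0" and kdef: "k = min m (nat \<lfloor>\<beta> / \<alpha>\<rfloor>)"
    and S: "(x, y) \<in> setS n m a b c d \<alpha> \<beta>"
  shows "(x, y) \<in> setR n m a b c d \<alpha> \<beta> k"
proof -
  have H: "(x, y) \<in> boxH n m a b c d" using S by (simp add: setS_def)
  note HB = boxH_D[OF H]
  obtain p where p: "p permutes {1..n}" "rearr n x = x \<circ> p" using rearr_eq_comp_perm HB by blast
  obtain q where q: "q permutes {1..m}" "rearr m y = y \<circ> q" using rearr_eq_comp_perm HB by blast
  have S': "(rearr n x, rearr m y) \<in> setS n m a b c d \<alpha> \<beta>"
    using setS_comp_perm[OF S p(1) q(1)] p(2) q(2) by simp
  have H': "(rearr n x, rearr m y) \<in> boxH n m a b c d" using S' by (simp add: setS_def)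
  note HB' = boxH_D[OF H']
  obtain x' where x': "isvec n x'" "nonincr n x'" "in_box n a b x'" "\<exists>J. staircase n a b x' J"
    "dominates n x' (rearr n x)" "prod x' {1..n} \<le> prod (rearr n x) {1..n}"
    using staircase_dominating_exists[OF isvec_rearr nonincr_rearr _ a0 n1] HB' by blast
  obtain J where J: "staircase n a b x' J" using x'(4) by blast
  have x'0: "0 \<le> x' j" if "j \<in> {1..n}" for j
  proof -
    have "a \<le> x' j" using x'(3) that by (auto simp: in_box_def)
    then show ?thesis using a0 by linarith
  qed
  have "(\<Prod>j=1..n. x' j powr \<beta>) \<le> (\<Prod>j=1..n. rearr n x j powr \<beta>)"
    by (rule prod_powr_mono[OF x'0 x'(6)]) (use be in auto)
  also have "\<dots> \<le> (\<Prod>i=1..m. rearr m y i powr \<alpha>)" using S' by (simp add: setS_def)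
  finally have PP: "(\<Prod>j=1..n. x' j powr \<beta>) \<le> (\<Prod>i=1..m. rearr m y i powr \<alpha>)" .
  have S'': "(x', rearr m y) \<in> setS n m a b c d \<alpha> \<beta>"
    using PP x' HB' by (auto simp: setS_def boxH_def in_box_def)
  have inT: "(x', rearr m y) \<in> convex hull setT n m a b c d \<alpha> \<beta> k"
    by (rule sorted_staircase_in_hull_setT[OF a0 c0 cd al be kdef S'' J nonincr_rearr])
  have mx: "majorizes n x' x"
    unfolding majorizes_iff_dominates using rearr_nonincr_id[OF x'(1,2)] x'(5) by simp
  have my: "majorizes m (rearr m y) y"
    unfolding majorizes_iff_dominates using rearr_nonincr_id[OF isvec_rearr nonincr_rearr] dominates_refl by metis
  show ?thesis unfolding setR_def using HB inT mx my x'(1) isvec_rearr by blast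
qed

lemma hull_setS_eq_setR:
  assumes n1: "1 \<le> n" and a0: "0 \<le> a" and c0: "0 \<le> c" and cd: "c < d"
    and al: "\<alpha> > 0" and be: "\<beta> > 0" and kdef: "k = min m (nat \<lfloor>\<beta> / \<alpha>\<rfloor>)"
  shows "convex hull (setS n m a b c d \<alpha> \<beta>) = setR n m a b c d \<alpha> \<beta> k"
proof
  show "convex hull setS n m a b c d \<alpha> \<beta> \<subseteq> setR n m a b c d \<alpha> \<beta> k"
  proof (rule hull_minimal)
    show "setS n m a b c d \<alpha> \<beta> \<subseteq> setR n m a b c d \<alpha> \<beta> k"
      using setS_subset_setR[OF n1 a0 c0 cd al be kdef] by auto
    show "convex (setR n m a b c d \<alpha> \<beta> k)" by (rule convex_setR)
  qed
  show "setR n m a b c d \<alpha> \<beta> k \<subseteq> convex hull setS n m a b c d \<alpha> \<beta>"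
  proof
    fix z assume "z \<in> setR n m a b c d \<alpha> \<beta> k"
    then obtain x y u v where "z = (x, y)" "isvec n x" "isvec m y" "majorizes m v y"
      "majorizes n u x" "isvec n u" "isvec m v" "(u, v) \<in> convex hull setT n m a b c d \<alpha> \<beta> k"
      by (auto simp: setR_def)
    then show "z \<in> convex hull setS n m a b c d \<alpha> \<beta>"
      using majorized_hull_subset_hull_setS[OF setT_subset_setS] by blast
  qed
qed

section \<open>The extremal vector \<open>u\<^sup>s\<close>\<close>

definition staircase_prod :: "nat \<Rightarrow> real \<Rightarrow> real \<Rightarrow> nat \<Rightarrow> real \<Rightarrow> real" where
  "staircase_prod n a b J s = b ^ J * (a + s - (b - a) * real J) * a ^ (n - J - 1)"

definition ustar_prod :: "nat \<Rightarrow> real \<Rightarrow> real \<Rightarrow> real \<Rightarrow> real" where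
  "ustar_prod n a b s = (\<Prod>j=1..n. ustar n a b s j)"

lemma istar_eq:
  assumes "a < b" "J \<le> n" "real J * (b - a) < s" "s \<le> real (J + 1) * (b - a)"
  shows "istar n a b s = J"
proof -
  have "0 \<le> real J * (b - a)" using assms(1) by simp
  then have s0: "s \<noteq> 0" using assms(3) by linarith
  have "Max {i. i \<le> n \<and> real i * (b - a) < s} = J"
  proof (rule Max_eqI)
    show "finite {i. i \<le> n \<and> real i * (b - a) < s}" by simp
    show "J \<in> {i. i \<le> n \<and> real i * (b - a) < s}" using assms by simp
    fix i assume "i \<in> {i. i \<le> n \<and> real i * (b - a) < s}"
    then have "real i * (b - a) < real (J + 1) * (b - a)" using assms(4) by simp
    then have "real i < real (J + 1)" using assms(1) by (simp add: mult_less_cancel_right)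
    then show "i \<le> J" by simp
  qed
  then show ?thesis using s0 by (simp add: istar_def)
qed

lemma istar_range:
  assumes "a < b" "1 \<le> n" "0 \<le> s" "s \<le> real n * (b - a)"
  shows "istar n a b s < n \<and>
    ((s = 0 \<and> istar n a b s = 0) \<or>
     (real (istar n a b s) * (b - a) < s \<and> s \<le> real (istar n a b s + 1) * (b - a)))"
proof (cases "s = 0")
  case True then show ?thesis using assms by (simp add: istar_def)
next
  case False
  then have sp: "0 < s" using assms by simp
  let ?A = "{i. i \<le> n \<and> real i * (b - a) < s}"
  have fA: "finite ?A" by simp
  have A0: "0 \<in> ?A" using sp by simp
  define J where "J = Max ?A"
  have JA: "J \<in> ?A" unfolding J_def by (rule Max_in[OF fA]) (use A0 in blast)
  have ist: "istar n a b s = J" using False by (simp add: istar_def J_def)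
  have Jn: "J < n"
  proof (rule ccontr)
    assume "\<not> J < n"
    then have "J = n" using JA by simp
    then show False using JA assms(4) by simp
  qed
  have "s \<le> real (J + 1) * (b - a)"
  proof (rule ccontr)
    assume "\<not> ?thesis"
    then have "J + 1 \<in> ?A" using Jn by simp
    then have "J + 1 \<le> J" using Max_ge[OF fA] by (simp add: J_def)
    then show False by simp
  qed
  then show ?thesis using ist Jn JA by simp
qed

lemma ustar_eq:
  fixes J :: nat
  assumes "istar n a b s = J"
  shows "ustar n a b s i = (if i \<le> J then b else if i = J + 1 then a + s - (b - a) * real J else a)"
  using assms by (simp add: ustar_def)

lemma prod_split3:
  fixes f :: "nat \<Rightarrow> real"
  assumes "J < n"
  shows "(\<Prod>j=1..n. f j) = (\<Prod>j=1..J. f j) * f (J + 1) * (\<Prod>j=J+2..n. f j)"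
proof -
  have e: "{1..n} = {1..J} \<union> ({J+1} \<union> {J+2..n})" using assms by auto
  have "(\<Prod>j=1..n. f j) = (\<Prod>j=1..J. f j) * (\<Prod>j\<in>{J+1} \<union> {J+2..n}. f j)"
    unfolding e by (rule prod.union_disjoint) auto
  also have "(\<Prod>j\<in>{J+1} \<union> {J+2..n}. f j) = f (J + 1) * (\<Prod>j=J+2..n. f j)"
    by (subst prod.union_disjoint) auto
  finally show ?thesis by (simp add: mult.assoc)
qed

lemma sum_split3:
  fixes f :: "nat \<Rightarrow> real"
  assumes "J < n"
  shows "(\<Sum>j=1..n. f j) = (\<Sum>j=1..J. f j) + f (J + 1) + (\<Sum>j=J+2..n. f j)"
proof -
  have e: "{1..n} = {1..J} \<union> ({J+1} \<union> {J+2..n})" using assms by auto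
  have "(\<Sum>j=1..n. f j) = (\<Sum>j=1..J. f j) + (\<Sum>j\<in>{J+1} \<union> {J+2..n}. f j)"
    unfolding e by (rule sum.union_disjoint) auto
  also have "(\<Sum>j\<in>{J+1} \<union> {J+2..n}. f j) = f (J + 1) + (\<Sum>j=J+2..n. f j)"
    by (subst sum.union_disjoint) auto
  finally show ?thesis by (simp add: add.assoc)
qed

lemma ustar_prod_eq_staircase_prod:
  assumes "istar n a b s = J" "J < n"
  shows "ustar_prod n a b s = staircase_prod n a b J s"
proof -
  have "ustar_prod n a b s = (\<Prod>j=1..J. ustar n a b s j) * ustar n a b s (J + 1) * (\<Prod>j=J+2..n. ustar n a b s j)"
    unfolding ustar_prod_def by (rule prod_split3[OF assms(2)])
  also have "(\<Prod>j=1..J. ustar n a b s j) = b ^ J"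
    using ustar_eq[OF assms(1)] by simp
  also have "(\<Prod>j=J+2..n. ustar n a b s j) = a ^ (n - J - 1)"
  proof -
    have "(\<Prod>j=J+2..n. ustar n a b s j) = (\<Prod>j=J+2..n. a)"
      by (rule prod.cong) (auto simp: ustar_eq[OF assms(1)])
    then show ?thesis using assms(2) by simp
  qed
  also have "ustar n a b s (J + 1) = a + s - (b - a) * real J" using ustar_eq[OF assms(1)] by simp
  finally show ?thesis by (simp add: staircase_prod_def)
qed

lemma staircase_prod_Suc_diff:
  assumes "J + 2 \<le> n"
  shows "staircase_prod n a b (J + 1) s - staircase_prod n a b J s = b ^ J * a ^ (n - J - 2) * (b - a) * (s - real (J + 1) * (b - a))"
proof -
  define r where "r = n - J - 2"
  have r: "n - J - 1 = Suc r" "n - (J + 1) - 1 = r" "n - J - 2 = r" using assms unfolding r_def by arith+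
  show ?thesis unfolding staircase_prod_def r by (simp add: algebra_simps)
qed

lemma staircase_prod_le_up:
  assumes "a < b" "0 \<le> a" "J \<le> J0" "J0 < n" "real J0 * (b - a) < s \<or> J = J0"
  shows "staircase_prod n a b J s \<le> staircase_prod n a b J0 s"
  using assms(3-5)
proof (induction "J0 - J" arbitrary: J)
  case 0 then show ?case by simp
next
  case (Suc k)
  then have J1: "J + 1 \<le> J0" "J \<noteq> J0" by auto
  then have s: "real J0 * (b - a) < s" using Suc.prems by simp
  have "staircase_prod n a b (J + 1) s \<le> staircase_prod n a b J0 s"
    using Suc.hyps(1)[of "J + 1"] Suc.hyps(2) J1 Suc.prems s by simp
  moreover have "staircase_prod n a b J s \<le> staircase_prod n a b (J + 1) s"
  proof -
    have "real (J + 1) * (b - a) \<le> real J0 * (b - a)" using J1 assms(1) by (intro mult_right_mono) auto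
    then have "0 \<le> s - real (J + 1) * (b - a)" using s by simp
    then have "0 \<le> b ^ J * a ^ (n - J - 2) * (b - a) * (s - real (J + 1) * (b - a))"
      using assms(1,2) by (intro mult_nonneg_nonneg) auto
    then show ?thesis using staircase_prod_Suc_diff[of J n a b s] J1 Suc.prems by simp
  qed
  ultimately show ?case by simp
qed

lemma staircase_prod_le_down:
  assumes "a < b" "0 \<le> a" "J0 \<le> J" "J < n" "s \<le> real (J0 + 1) * (b - a)"
  shows "staircase_prod n a b J s \<le> staircase_prod n a b J0 s"
  using assms(3-4)
proof (induction "J - J0" arbitrary: J)
  case 0 then show ?case by simp
next
  case (Suc k)
  define J' where "J' = J - 1"
  have J': "J = J' + 1" "J0 \<le> J'" using Suc.hyps(2) unfolding J'_def by arith+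
  have "staircase_prod n a b J' s \<le> staircase_prod n a b J0 s"
    using Suc.hyps(1)[of J'] Suc.hyps(2) J' Suc.prems by simp
  moreover have "staircase_prod n a b J s \<le> staircase_prod n a b J' s"
  proof -
    have "real (J0 + 1) * (b - a) \<le> real (J' + 1) * (b - a)" using J' assms(1) by (intro mult_right_mono) auto
    then have "s - real (J' + 1) * (b - a) \<le> 0" using assms(5) by simp
    moreover have "0 \<le> b ^ J' * a ^ (n - J' - 2) * (b - a)" using assms(1,2) by simp
    ultimately have "b ^ J' * a ^ (n - J' - 2) * (b - a) * (s - real (J' + 1) * (b - a)) \<le> 0"
      by (simp add: mult_nonneg_nonpos)
    then show ?thesis using staircase_prod_Suc_diff[of J' n a b s] J' Suc.prems by simp
  qed
  ultimately show ?case by simp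
qed

lemma staircase_prod_le_ustar_prod:
  assumes "a < b" "0 \<le> a" "1 \<le> n" "0 \<le> s" "s \<le> real n * (b - a)" "J < n"
  shows "staircase_prod n a b J s \<le> ustar_prod n a b s"
proof -
  define J0 where "J0 = istar n a b s"
  have R: "J0 < n" "(s = 0 \<and> J0 = 0) \<or> (real J0 * (b - a) < s \<and> s \<le> real (J0 + 1) * (b - a))"
    using istar_range[OF assms(1,3,4,5)] by (auto simp: J0_def)
  have prod_eq: "ustar_prod n a b s = staircase_prod n a b J0 s" using ustar_prod_eq_staircase_prod[of n a b s J0] R by (simp add: J0_def)
  have sle: "s \<le> real (J0 + 1) * (b - a)" using R assms(1) by auto
  show ?thesis
  proof (cases "J \<le> J0")
    case True
    have "real J0 * (b - a) < s \<or> J = J0" using R True by auto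
    then show ?thesis using staircase_prod_le_up[OF assms(1,2) True R(1)] prod_eq by simp
  next
    case False
    then show ?thesis using staircase_prod_le_down[OF assms(1,2) _ assms(6) sle] prod_eq by simp
  qed
qed

lemma ustar_prod_convex:
  assumes "a < b" "0 \<le> a" "1 \<le> n"
    and s1: "0 \<le> s1" "s1 \<le> real n * (b - a)" and s2: "0 \<le> s2" "s2 \<le> real n * (b - a)"
    and l: "0 \<le> l" "l \<le> 1"
  shows "ustar_prod n a b (l * s1 + (1 - l) * s2) \<le> l * ustar_prod n a b s1 + (1 - l) * ustar_prod n a b s2"
proof -
  let ?s = "l * s1 + (1 - l) * s2"
  have s0: "0 \<le> ?s" using s1 s2 l by simp
  have sn: "?s \<le> real n * (b - a)"
  proof -
    have "?s \<le> l * (real n * (b - a)) + (1 - l) * (real n * (b - a))"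
      using s1 s2 l by (intro add_mono mult_left_mono) auto
    then show ?thesis by (simp add: algebra_simps)
  qed
  define J0 where "J0 = istar n a b ?s"
  have R: "J0 < n" using istar_range[OF assms(1,3) s0 sn] by (simp add: J0_def)
  have "ustar_prod n a b ?s = staircase_prod n a b J0 ?s" using ustar_prod_eq_staircase_prod[of n a b ?s J0] R by (simp add: J0_def)
  also have "\<dots> = l * staircase_prod n a b J0 s1 + (1 - l) * staircase_prod n a b J0 s2"
    by (simp add: staircase_prod_def algebra_simps)
  also have "\<dots> \<le> l * ustar_prod n a b s1 + (1 - l) * ustar_prod n a b s2"
    using staircase_prod_le_ustar_prod[OF assms(1-3) s1 R] staircase_prod_le_ustar_prod[OF assms(1-3) s2 R] l
    by (intro add_mono mult_left_mono) auto
  finally show ?thesis .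
qed

lemma ustar_bounds:
  assumes "a < b" "1 \<le> n" "0 \<le> s" "s \<le> real n * (b - a)"
  shows "a \<le> ustar n a b s i \<and> ustar n a b s i \<le> b"
proof -
  define J0 where "J0 = istar n a b s"
  have R: "J0 < n" "(s = 0 \<and> J0 = 0) \<or> (real J0 * (b - a) < s \<and> s \<le> real (J0 + 1) * (b - a))"
    using istar_range[OF assms] by (auto simp: J0_def)
  have "a \<le> a + s - (b - a) * real J0 \<and> a + s - (b - a) * real J0 \<le> b"
    using R assms(1) by (auto simp: algebra_simps)
  then show ?thesis using ustar_eq[of n a b s J0] assms(1) by (simp add: J0_def)
qed

lemma ustar_prod_nonneg:
  assumes "a < b" "0 \<le> a" "1 \<le> n" "0 \<le> s" "s \<le> real n * (b - a)"
  shows "0 \<le> ustar_prod n a b s"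
  unfolding ustar_prod_def using ustar_bounds[OF assms(1) assms(3-5)] assms(2)
  by (intro prod_nonneg) (meson order_trans)

lemma staircase_eq_ustar:
  assumes "a < b" "isvec n x" "in_box n a b x" "staircase n a b x J"
  shows "\<forall>j\<in>{1..n}. x j = ustar n a b (sumS n a x) j"
proof -
  have J: "J < n" using assms(4) by (simp add: staircase_def)
  have xlo: "x i = b" if "i \<in> {1..n}" "i \<le> J" for i using assms(4) that by (simp add: staircase_def)
  have xhi: "x i = a" if "i \<in> {1..n}" "J + 2 \<le> i" for i using assms(4) that by (simp add: staircase_def)
  define t where "t = x (J + 1)"
  have t: "a \<le> t" "t \<le> b" using assms(3) J by (auto simp: in_box_def t_def)
  have "sumS n a x = (\<Sum>j=1..J. x j - a) + (t - a) + (\<Sum>j=J+2..n. x j - a)"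
    unfolding sumS_def t_def by (rule sum_split3[OF J])
  also have "(\<Sum>j=1..J. x j - a) = real J * (b - a)"
  proof -
    have "(\<Sum>j=1..J. x j - a) = (\<Sum>j=1..J. b - a)" by (rule sum.cong) (use xlo J in auto)
    then show ?thesis by simp
  qed
  also have "(\<Sum>j=J+2..n. x j - a) = 0" using xhi by simp
  finally have sx: "sumS n a x = real J * (b - a) + (t - a)" by simp
  show ?thesis
  proof (cases "t = a \<and> J > 0")
    case True
    then obtain J' where J': "J = J' + 1" by (metis Suc_eq_plus1 gr0_implies_Suc)
    have ist: "istar n a b (sumS n a x) = J'"
      by (rule istar_eq) (use assms(1) sx True J J' in \<open>auto simp: algebra_simps\<close>)
    have mid: "a + sumS n a x - (b - a) * real J' = b" using sx True J' by (simp add: algebra_simps)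
    have u: "ustar n a b (sumS n a x) i = (if i \<le> J' then b else if i = J' + 1 then b else a)" for i
      using ustar_eq[OF ist, of i] mid by simp
    show ?thesis
    proof
      fix j assume j: "j \<in> {1..n}"
      show "x j = ustar n a b (sumS n a x) j"
        using u[of j] xlo[OF j] xhi[OF j] True J' t_def by (cases "j \<le> J"; cases "j = J + 1") auto
    qed
  next
    case False
    then consider "J = 0" "t = a" | "a < t" using t by linarith
    then have ist: "istar n a b (sumS n a x) = J"
    proof cases
      case 1 then show ?thesis using sx by (simp add: istar_def)
    next
      case 2 then show ?thesis
        by (intro istar_eq) (use assms(1) sx J t in \<open>auto simp: algebra_simps\<close>)
    qed
    show ?thesis
    proof
      fix j assume j: "j \<in> {1..n}"
      show "x j = ustar n a b (sumS n a x) j"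
        using ustar_eq[OF ist, of j] xlo[OF j] xhi[OF j] sx t_def by (cases "j \<le> J"; cases "j = J + 1") auto
    qed
  qed
qed

section \<open>The case \<open>m \<alpha> \<le> \<beta>\<close>\<close>

lemma powr_le_self: "0 \<le> u \<Longrightarrow> u \<le> 1 \<Longrightarrow> 1 \<le> g \<Longrightarrow> u powr g \<le> (u::real)"
  by (cases "u = 0") (auto intro: powr_le_one_le)

lemma powr_convex_comb:
  fixes p1 p2 l g :: real
  assumes "0 \<le> p1" "0 \<le> p2" "0 \<le> l" "l \<le> 1" "1 \<le> g"
  shows "(l * p1 + (1 - l) * p2) powr g \<le> l * p1 powr g + (1 - l) * p2 powr g"
proof (cases "p1 = 0 \<or> p2 = 0")
  case True
  then show ?thesis
  proof
    assume p: "p1 = 0"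
    have "((1 - l) * p2) powr g = (1 - l) powr g * p2 powr g" by (simp add: powr_mult)
    also have "\<dots> \<le> (1 - l) * p2 powr g"
      by (rule mult_right_mono[OF powr_le_self]) (use assms in auto)
    finally show ?thesis using p by simp
  next
    assume p: "p2 = 0"
    have "(l * p1) powr g = l powr g * p1 powr g" by (simp add: powr_mult)
    also have "\<dots> \<le> l * p1 powr g"
      by (rule mult_right_mono[OF powr_le_self]) (use assms in auto)
    finally show ?thesis using p by simp
  qed
next
  case False
  then have pp: "p1 \<in> {0<..}" "p2 \<in> {0<..}" using assms by auto
  have "(\<lambda>x. x powr g) ((1 - (1 - l)) *\<^sub>R p1 + (1 - l) *\<^sub>R p2) \<le>
        (1 - (1 - l)) * (\<lambda>x. x powr g) p1 + (1 - l) * (\<lambda>x. x powr g) p2"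
    by (rule convex_onD[OF powr_convex[OF assms(5)]]) (use assms pp in auto)
  then show ?thesis by simp
qed

definition geom_mean :: "nat \<Rightarrow> (nat \<Rightarrow> real) \<Rightarrow> real" where
  "geom_mean m y = (\<Prod>i=1..m. y i powr (1 / real m))"

lemma geom_mean_nonneg: "0 \<le> geom_mean m y" by (simp add: geom_mean_def prod_nonneg)

lemma geom_mean_div_le_mean:
  assumes "1 \<le> m" "\<And>i. i \<in> {1..m} \<Longrightarrow> 0 \<le> v i" "\<And>i. i \<in> {1..m} \<Longrightarrow> 0 < w i"
  shows "geom_mean m v / geom_mean m w \<le> (\<Sum>i=1..m. (v i / w i) / real m)"
proof -
  have "(\<Prod>i=1..m. v i / w i) powr (1 / real (card {1..m})) \<le> (\<Sum>i=1..m. (v i / w i) / real (card {1..m}))"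
    by (rule arith_geom_mean) (use assms in \<open>auto intro: divide_nonneg_pos\<close>)
  moreover have "(\<Prod>i=1..m. v i / w i) powr (1 / real m) = geom_mean m v / geom_mean m w"
    by (simp add: geom_mean_def prod_powr_distrib powr_divide prod_dividef)
  ultimately show ?thesis by simp
qed

lemma geom_mean_concave:
  assumes m1: "1 \<le> m" and y0: "\<And>i. i \<in> {1..m} \<Longrightarrow> 0 \<le> y i" and z0: "\<And>i. i \<in> {1..m} \<Longrightarrow> 0 \<le> z i"
    and l: "0 \<le> l" "l \<le> 1"
  shows "l * geom_mean m y + (1 - l) * geom_mean m z \<le> geom_mean m (l *\<^sub>R y + (1 - l) *\<^sub>R z)"
proof -
  define w where "w = l *\<^sub>R y + (1 - l) *\<^sub>R z"
  have wi: "w i = l * y i + (1 - l) * z i" for i by (simp add: w_def)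
  show ?thesis
  proof (cases "l = 0 \<or> l = 1")
    case True then show ?thesis by (auto simp: w_def)
  next
    case False
    then have l': "0 < l" "0 < 1 - l" using l by auto
    show ?thesis
    proof (cases "\<exists>i\<in>{1..m}. w i = 0")
      case True
      then obtain i where i: "i \<in> {1..m}" "w i = 0" by blast
      have "0 \<le> l * y i" "0 \<le> (1 - l) * z i" using y0[OF i(1)] z0[OF i(1)] l' by auto
      then have "l * y i = 0" "(1 - l) * z i = 0" using i(2) wi[of i] by linarith+
      then have yz: "y i = 0" "z i = 0" using l' by auto
      have "geom_mean m y = 0" unfolding geom_mean_def using i yz by (intro prod_zero) auto
      moreover have "geom_mean m z = 0" unfolding geom_mean_def using i yz by (intro prod_zero) auto
      ultimately show ?thesis using geom_mean_nonneg[of m "l *\<^sub>R y + (1 - l) *\<^sub>R z"] by simp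
    next
      case False
      have w0: "0 < w i" if "i \<in> {1..m}" for i
      proof -
        have "0 \<le> w i" unfolding wi using y0[OF that] z0[OF that] l'
          by (intro add_nonneg_nonneg mult_nonneg_nonneg) auto
        moreover have "w i \<noteq> 0" using False that by blast
        ultimately show ?thesis by simp
      qed
      have Gw: "0 < geom_mean m w"
        unfolding geom_mean_def using w0 by (intro prod_pos) (simp add: less_imp_neq[symmetric])
      note am = geom_mean_div_le_mean[OF m1 _ w0]
      have "l * (geom_mean m y / geom_mean m w) + (1 - l) * (geom_mean m z / geom_mean m w)
          \<le> l * (\<Sum>i=1..m. (y i / w i) / real m) + (1 - l) * (\<Sum>i=1..m. (z i / w i) / real m)"
        using am[OF y0] am[OF z0] l' by (intro add_mono mult_left_mono) auto
      also have "\<dots> = (\<Sum>i=1..m. (l * y i + (1 - l) * z i) / w i / real m)"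
        by (simp add: sum_distrib_left sum.distrib[symmetric] add_divide_distrib)
      also have "\<dots> = (\<Sum>i=1..m. 1 / real m)"
      proof (rule sum.cong[OF refl])
        fix i assume i: "i \<in> {1..m}"
        have "w i \<noteq> 0" using w0[OF i] by simp
        then show "(l * y i + (1 - l) * z i) / w i / real m = 1 / real m" by (simp add: wi[symmetric])
      qed
      also have "\<dots> = 1" using m1 by simp
      finally have "(l * geom_mean m y + (1 - l) * geom_mean m z) / geom_mean m w \<le> 1"
        by (simp add: add_divide_distrib)
      then show ?thesis using Gw by (simp add: w_def divide_le_eq)
    qed
  qed
qed

lemma convex_bound_ge:
  fixes x y a u v :: real
  assumes "a \<le> x" "a \<le> y" "0 \<le> u" "0 \<le> v" "u + v = 1"
  shows "a \<le> u * x + v * y"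
proof -
  have "u * a + v * a \<le> u * x + v * y" using assms by (intro add_mono mult_left_mono) auto
  moreover have "u * a + v * a = a" using assms(5) by (simp add: distrib_right[symmetric])
  ultimately show ?thesis by simp
qed

definition setQ :: "nat \<Rightarrow> nat \<Rightarrow> real \<Rightarrow> real \<Rightarrow> real \<Rightarrow> real \<Rightarrow> real \<Rightarrow> real \<Rightarrow>
    ((nat \<Rightarrow> real) \<times> (nat \<Rightarrow> real)) set" where
  "setQ n m a b c d \<alpha> \<beta> = {(x, y) \<in> boxH n m a b c d.
      (\<Prod>i=1..m. y i powr (1 / real m)) \<ge>
      (\<Prod>j=1..n. (ustar n a b (sumS n a x) j) powr (\<beta> / (real m * \<alpha>)))}"

lemma setQ_iff: "(x, y) \<in> setQ n m a b c d \<alpha> \<beta> \<longleftrightarrow>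
   (x, y) \<in> boxH n m a b c d \<and> ustar_prod n a b (sumS n a x) powr (\<beta> / (real m * \<alpha>)) \<le> geom_mean m y"
  by (simp add: setQ_def geom_mean_def ustar_prod_def prod_powr_distrib)

lemma sumS_eq_prefix_sum: "sumS n a x = prefix_sum x n - real n * a"
  by (simp add: sumS_def prefix_sum_def sum_subtractf)

lemma sumS_range:
  assumes "in_box n a b x"
  shows "0 \<le> sumS n a x \<and> sumS n a x \<le> real n * (b - a)"
proof -
  have "0 \<le> sumS n a x" unfolding sumS_def using assms by (intro sum_nonneg) (auto simp: in_box_def)
  moreover have "sumS n a x \<le> (\<Sum>i=1..n. b - a)"
    unfolding sumS_def using assms by (intro sum_mono) (auto simp: in_box_def)
  ultimately show ?thesis by simp
qed

lemma sumS_convex_comb: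
  assumes "u + v = 1"
  shows "sumS n a (u *\<^sub>R x1 + v *\<^sub>R x2) = u * sumS n a x1 + v * sumS n a x2"
proof -
  have e: "u * x1 i + v * x2 i - a = u * (x1 i - a) + v * (x2 i - a)" for i
  proof -
    have "u * (x1 i - a) + v * (x2 i - a) = u * x1 i + v * x2 i - (u + v) * a" by (simp add: algebra_simps)
    then show ?thesis using assms by simp
  qed
  show ?thesis unfolding sumS_def by (simp add: e sum.distrib sum_distrib_left)
qed

lemma ustar_majorant_exists:
  assumes "isvec n x" "in_box n a b x" "0 \<le> a" "a < b" "1 \<le> n"
  shows "\<exists>x'. isvec n x' \<and> in_box n a b x' \<and> majorizes n x' x \<and> prod x' {1..n} \<le> prod x {1..n} \<and>
     (\<forall>j\<in>{1..n}. x' j = ustar n a b (sumS n a x) j)"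
proof -
  obtain p where p: "p permutes {1..n}" "rearr n x = x \<circ> p" using rearr_eq_comp_perm assms(1) by blast
  have ib: "in_box n a b (rearr n x)"
    using assms(2) permutes_in_image[OF p(1)] p(2) by (auto simp: in_box_def)
  obtain x' where x': "isvec n x'" "nonincr n x'" "in_box n a b x'" "\<exists>J. staircase n a b x' J"
    "dominates n x' (rearr n x)" "prod x' {1..n} \<le> prod (rearr n x) {1..n}"
    using staircase_dominating_exists[OF isvec_rearr nonincr_rearr ib assms(3,5)] by blast
  obtain J where J: "staircase n a b x' J" using x'(4) by blast
  have px: "prod (rearr n x) {1..n} = prod x {1..n}"
    using prod.permute[OF p(1), of x] p(2) by simp
  have "prefix_sum (rearr n x) n = prefix_sum x n"
    using prefix_sum_comp_perm_total[OF p(1), of x] p(2) by simp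
  then have ss: "sumS n a x' = sumS n a x"
    using x'(5) by (simp add: sumS_eq_prefix_sum dominates_def)
  have mx: "majorizes n x' x"
    unfolding majorizes_iff_dominates using rearr_nonincr_id[OF x'(1,2)] x'(5) by simp
  show ?thesis
    using staircase_eq_ustar[OF assms(4) x'(1,3) J] ss x' px mx by (intro exI[of _ x']) auto
qed

lemma geom_mean_eq_powr:
  assumes "\<alpha> > 0" "1 \<le> m"
  shows "geom_mean m y = (\<Prod>i=1..m. y i powr \<alpha>) powr (1 / (real m * \<alpha>))"
proof -
  have "(\<Prod>i=1..m. y i powr \<alpha>) powr (1 / (real m * \<alpha>)) = (\<Prod>i=1..m. (y i powr \<alpha>) powr (1 / (real m * \<alpha>)))"
    by (simp add: prod_powr_distrib)
  also have "\<dots> = (\<Prod>i=1..m. y i powr (1 / real m))"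
    using assms by (simp add: powr_powr)
  finally show ?thesis by (simp add: geom_mean_def)
qed

lemma setS_subset_setQ:
  assumes n1: "1 \<le> n" and m1: "1 \<le> m" and a0: "0 \<le> a" and ab: "a < b"
    and al: "\<alpha> > 0" and be: "\<beta> > 0"
    and S: "(x, y) \<in> setS n m a b c d \<alpha> \<beta>"
  shows "(x, y) \<in> setQ n m a b c d \<alpha> \<beta>"
proof -
  have H: "(x, y) \<in> boxH n m a b c d" using S by (simp add: setS_def)
  note HB = boxH_D[OF H]
  obtain x' where x': "isvec n x'" "in_box n a b x'" "majorizes n x' x" "prod x' {1..n} \<le> prod x {1..n}"
    "\<forall>j\<in>{1..n}. x' j = ustar n a b (sumS n a x) j"
    using ustar_majorant_exists[OF _ _ a0 ab n1] HB by blast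
  have prod_eq: "ustar_prod n a b (sumS n a x) = prod x' {1..n}" unfolding ustar_prod_def using x'(5) by simp
  have x'0: "0 \<le> prod x' {1..n}"
  proof (rule prod_nonneg)
    fix j assume j: "j \<in> {1..n}"
    have "a \<le> x' j" using x'(2) j by (auto simp: in_box_def)
    then show "0 \<le> x' j" using a0 by linarith
  qed
  have "prod x' {1..n} powr (\<beta> / (real m * \<alpha>)) = (prod x' {1..n} powr \<beta>) powr (1 / (real m * \<alpha>))"
    by (simp add: powr_powr)
  also have "\<dots> \<le> (prod x {1..n} powr \<beta>) powr (1 / (real m * \<alpha>))"
    using x'0 x'(4) be m1 al by (intro powr_mono2 powr_mono2) auto
  also have "\<dots> \<le> (\<Prod>i=1..m. y i powr \<alpha>) powr (1 / (real m * \<alpha>))"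
  proof (rule powr_mono2)
    show "prod x {1..n} powr \<beta> \<le> (\<Prod>i=1..m. y i powr \<alpha>)"
      using S by (simp add: setS_def prod_powr_distrib)
  qed (use m1 al in auto)
  also have "\<dots> = geom_mean m y" using geom_mean_eq_powr[OF al m1] by simp
  finally show ?thesis unfolding setQ_iff using H prod_eq by simp
qed

lemma setQ_subset_hull_setS:
  assumes n1: "1 \<le> n" and m1: "1 \<le> m" and a0: "0 \<le> a" and ab: "a < b"
    and al: "\<alpha> > 0" and be: "\<beta> > 0"
    and Q: "(x, y) \<in> setQ n m a b c d \<alpha> \<beta>"
  shows "(x, y) \<in> convex hull setS n m a b c d \<alpha> \<beta>"
proof -
  have H: "(x, y) \<in> boxH n m a b c d" and ineq: "ustar_prod n a b (sumS n a x) powr (\<beta> / (real m * \<alpha>)) \<le> geom_mean m y"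
    using Q by (auto simp: setQ_iff)
  note HB = boxH_D[OF H]
  obtain x' where x': "isvec n x'" "in_box n a b x'" "majorizes n x' x" "prod x' {1..n} \<le> prod x {1..n}"
    "\<forall>j\<in>{1..n}. x' j = ustar n a b (sumS n a x) j"
    using ustar_majorant_exists[OF _ _ a0 ab n1] HB by blast
  have prod_eq: "ustar_prod n a b (sumS n a x) = prod x' {1..n}" unfolding ustar_prod_def using x'(5) by simp
  have x'0: "0 \<le> prod x' {1..n}"
  proof (rule prod_nonneg)
    fix j assume j: "j \<in> {1..n}"
    have "a \<le> x' j" using x'(2) j by (auto simp: in_box_def)
    then show "0 \<le> x' j" using a0 by linarith
  qed
  have mpos: "0 < real m * \<alpha>" using m1 al by simp
  have mz: "real m \<noteq> 0" "\<alpha> \<noteq> 0" using m1 al by auto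
  have bb: "\<beta> / (real m * \<alpha>) * (real m * \<alpha>) = \<beta>" using mz by simp
  have "prod x' {1..n} powr \<beta> = (prod x' {1..n} powr (\<beta> / (real m * \<alpha>))) powr (real m * \<alpha>)"
    by (simp only: powr_powr bb)
  also have "\<dots> \<le> (geom_mean m y) powr (real m * \<alpha>)"
    by (rule powr_mono2) (use ineq prod_eq mpos in auto)
  also have "\<dots> = (\<Prod>i=1..m. y i powr \<alpha>)"
  proof -
    have "0 \<le> (\<Prod>i=1..m. y i powr \<alpha>)" by (simp add: prod_nonneg)
    then show ?thesis using geom_mean_eq_powr[OF al m1, of y] mpos by (simp add: powr_powr)
  qed
  finally have key: "(\<Prod>j=1..n. x' j powr \<beta>) \<le> (\<Prod>i=1..m. y i powr \<alpha>)"
    by (simp add: prod_powr_distrib)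
  have sub: "perm_orbit n x' \<times> {y} \<subseteq> setS n m a b c d \<alpha> \<beta>"
  proof
    fix z assume "z \<in> perm_orbit n x' \<times> {y}"
    then obtain p where p: "p permutes {1..n}" "z = (x' \<circ> p, y)" by (auto simp: perm_orbit_def)
    have pin: "\<And>i. i \<in> {1..n} \<Longrightarrow> p i \<in> {1..n}" using permutes_in_image[OF p(1)] by blast
    have pout: "\<And>i. i \<notin> {1..n} \<Longrightarrow> p i = i" using p(1) by (simp add: permutes_not_in)
    have pp: "(\<Prod>j=1..n. (x' \<circ> p) j powr \<beta>) = (\<Prod>j=1..n. x' j powr \<beta>)"
      using prod.permute[OF p(1), of "\<lambda>j. x' j powr \<beta>"] by (simp add: comp_def)
    show "z \<in> setS n m a b c d \<alpha> \<beta>"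
      using p(2) pp key H x'(1,2) pin pout
      by (auto simp: setS_def boxH_def isvec_def in_box_def)
  qed
  have "(x, y) \<in> (convex hull perm_orbit n x') \<times> (convex hull {y})"
    using majorized_in_hull_perm_orbit[OF HB[THEN conjunct1] x'(1) x'(3)] by simp
  also have "\<dots> = convex hull (perm_orbit n x' \<times> {y})" by (simp add: convex_hull_Times)
  also have "\<dots> \<subseteq> convex hull setS n m a b c d \<alpha> \<beta>" by (rule hull_mono[OF sub])
  finally show ?thesis .
qed

lemma convex_setQ:
  assumes n1: "1 \<le> n" and m1: "1 \<le> m" and a0: "0 \<le> a" and ab: "a < b" and c0: "0 \<le> c"
    and al: "\<alpha> > 0" and be: "\<beta> > 0" and mab: "real m * \<alpha> \<le> \<beta>"
  shows "convex (setQ n m a b c d \<alpha> \<beta>)"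
proof (rule convexI)
  fix z1 z2 and u v :: real
  assume z1: "z1 \<in> setQ n m a b c d \<alpha> \<beta>" and z2: "z2 \<in> setQ n m a b c d \<alpha> \<beta>"
    and uv: "0 \<le> u" "0 \<le> v" "u + v = 1"
  obtain x1 y1 where e1: "z1 = (x1, y1)" by (cases z1)
  obtain x2 y2 where e2: "z2 = (x2, y2)" by (cases z2)
  have H1: "(x1, y1) \<in> boxH n m a b c d" and Q1: "ustar_prod n a b (sumS n a x1) powr (\<beta> / (real m * \<alpha>)) \<le> geom_mean m y1"
    using z1 e1 by (auto simp: setQ_iff)
  have H2: "(x2, y2) \<in> boxH n m a b c d" and Q2: "ustar_prod n a b (sumS n a x2) powr (\<beta> / (real m * \<alpha>)) \<le> geom_mean m y2"
    using z2 e2 by (auto simp: setQ_iff)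
  note B1 = boxH_D[OF H1] and B2 = boxH_D[OF H2]
  let ?g = "\<beta> / (real m * \<alpha>)"
  have g1: "1 \<le> ?g" using mab m1 al by simp
  have vu: "v = 1 - u" using uv by simp
  let ?x = "u *\<^sub>R x1 + v *\<^sub>R x2" and ?y = "u *\<^sub>R y1 + v *\<^sub>R y2"
  have Hx: "(?x, ?y) \<in> boxH n m a b c d"
    using B1 B2 uv unfolding boxH_def in_box_def
    by (auto intro!: isvec_lincomb convex_bound_ge convex_bound_le)
  have r1: "0 \<le> sumS n a x1" "sumS n a x1 \<le> real n * (b - a)" using sumS_range B1 by blast+
  have r2: "0 \<le> sumS n a x2" "sumS n a x2 \<le> real n * (b - a)" using sumS_range B2 by blast+
  have p1: "0 \<le> ustar_prod n a b (sumS n a x1)" by (rule ustar_prod_nonneg[OF ab a0 n1 r1])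
  have p2: "0 \<le> ustar_prod n a b (sumS n a x2)" by (rule ustar_prod_nonneg[OF ab a0 n1 r2])
  have s: "sumS n a ?x = u * sumS n a x1 + (1 - u) * sumS n a x2"
    using sumS_convex_comb[OF uv(3)] vu by simp
  have u1: "u \<le> 1" using uv by simp
  have "ustar_prod n a b (sumS n a ?x) \<le> u * ustar_prod n a b (sumS n a x1) + (1 - u) * ustar_prod n a b (sumS n a x2)"
    unfolding s by (rule ustar_prod_convex[OF ab a0 n1 r1 r2 uv(1) u1])
  moreover have "0 \<le> ustar_prod n a b (sumS n a ?x)"
    using ustar_prod_nonneg[OF ab a0 n1] sumS_range[of n a b ?x] Hx boxH_D by blast
  ultimately have "ustar_prod n a b (sumS n a ?x) powr ?g \<le> (u * ustar_prod n a b (sumS n a x1) + (1 - u) * ustar_prod n a b (sumS n a x2)) powr ?g"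
    using g1 by (intro powr_mono2) auto
  also have "\<dots> \<le> u * ustar_prod n a b (sumS n a x1) powr ?g + (1 - u) * ustar_prod n a b (sumS n a x2) powr ?g"
    by (rule powr_convex_comb[OF p1 p2 uv(1) u1 g1])
  also have "\<dots> \<le> u * geom_mean m y1 + (1 - u) * geom_mean m y2"
    using Q1 Q2 uv by (intro add_mono mult_left_mono) auto
  also have "\<dots> \<le> geom_mean m (u *\<^sub>R y1 + (1 - u) *\<^sub>R y2)"
  proof (rule geom_mean_concave[OF m1 _ _ uv(1) u1])
    fix i assume "i \<in> {1..m}"
    then show "0 \<le> y1 i" "0 \<le> y2 i" using B1 B2 c0 by (auto simp: in_box_def intro: order_trans)
  qed
  finally have "ustar_prod n a b (sumS n a ?x) powr ?g \<le> geom_mean m ?y" using vu by simp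
  then show "u *\<^sub>R z1 + v *\<^sub>R z2 \<in> setQ n m a b c d \<alpha> \<beta>"
    unfolding e1 e2 using Hx by (simp add: setQ_iff)
qed

lemma hull_setS_eq_setQ:
  assumes n1: "1 \<le> n" and m1: "1 \<le> m" and a0: "0 \<le> a" and ab: "a < b" and c0: "0 \<le> c"
    and al: "\<alpha> > 0" and be: "\<beta> > 0" and mab: "real m * \<alpha> \<le> \<beta>"
  shows "convex hull (setS n m a b c d \<alpha> \<beta>) = setQ n m a b c d \<alpha> \<beta>"
proof
  show "convex hull setS n m a b c d \<alpha> \<beta> \<subseteq> setQ n m a b c d \<alpha> \<beta>"
  proof (rule hull_minimal)
    show "setS n m a b c d \<alpha> \<beta> \<subseteq> setQ n m a b c d \<alpha> \<beta>"
      using setS_subset_setQ[OF n1 m1 a0 ab al be] by auto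
    show "convex (setQ n m a b c d \<alpha> \<beta>)" by (rule convex_setQ[OF n1 m1 a0 ab c0 al be mab])
  qed
  show "setQ n m a b c d \<alpha> \<beta> \<subseteq> convex hull setS n m a b c d \<alpha> \<beta>"
    using setQ_subset_hull_setS[OF n1 m1 a0 ab al be] by auto
qed

theorem mainTheorem17:
  fixes n m :: nat and a b c d \<alpha> \<beta> :: real
  assumes "1 \<le> n" and "1 \<le> m"
    and "0 \<le> a" and "a < b" and "0 \<le> c" and "c < d"
    and "\<alpha> > 0" and "\<beta> > 0"
  defines "k \<equiv> min m (nat \<lfloor>\<beta> / \<alpha>\<rfloor>)"
  defines "T \<equiv> (\<Union>i\<in>{0..m-k}. \<Union>j\<in>{0..n-1}. setSij n m a b c d \<alpha> \<beta> k i j)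
                \<union> (\<Union>j\<in>{0..n}. setC n m a b c d \<alpha> \<beta> j)"
  shows "convex hull (setS n m a b c d \<alpha> \<beta>) =
           {(x, y). isvec n x \<and> isvec m y \<and>
              (\<exists>u v. majorizes m v y \<and> majorizes n u x \<and> isvec n u \<and> isvec m v \<and>
                     (u, v) \<in> convex hull T)} \<and>
         (real m * \<alpha> \<le> \<beta> \<longrightarrow>
         convex hull (setS n m a b c d \<alpha> \<beta>) =
           {(x, y) \<in> boxH n m a b c d.
              (\<Prod>i=1..m. y i powr (1 / real m)) \<ge>
              (\<Prod>j=1..n. (ustar n a b (sumS n a x) j) powr (\<beta> / (real m * \<alpha>)))})"
proof (intro conjI impI)
  show "convex hull (setS n m a b c d \<alpha> \<beta>) =
      {(x, y). isvec n x \<and> isvec m y \<and>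
        (\<exists>u v. majorizes m v y \<and> majorizes n u x \<and> isvec n u \<and> isvec m v \<and> (u, v) \<in> convex hull T)}"
    using hull_setS_eq_setR[OF assms(1,3,5-8) k_def[THEN meta_eq_to_obj_eq]]
    by (simp add: T_def setT_def setR_def)
next
  assume "real m * \<alpha> \<le> \<beta>"
  with hull_setS_eq_setQ[OF assms(1-5,7,8)] show "convex hull (setS n m a b c d \<alpha> \<beta>) =
      {(x, y) \<in> boxH n m a b c d.
        (\<Prod>i=1..m. y i powr (1 / real m)) \<ge>
        (\<Prod>j=1..n. (ustar n a b (sumS n a x) j) powr (\<beta> / (real m * \<alpha>)))}"
    by (simp add: setQ_def)
qed

end
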